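(* Let $k$ be a field, $n\ge2$, $R=k[x_1,\dots,x_n]$, and $I=(x_1^a,\dots,x_n^a,(x_1\cdots x_n)^b)$ with integers $0<b<a$. Then: (a) $J:=(x_1^a,\dots,x_n^a)$ is a minimal reduction of $I$ if and only if $nb\ge a$; in this case, letting $p$ be the smallest integer with $1\le p\le n$ and $pb\ge a$, one has $\operatorname{red}_J(I)=p-1$. (b) If $nb<a$, then $Q:=(x_1^a-x_n^a,\dots,x_{n-1}^a-x_n^a,(x_1\cdots x_n)^b)$ is a minimal reduction of $I$ and $\operatorname{red}_Q(I)=n-1$.
   Context: For ideals $J\subset I$, $J$ is a reduction of $I$ if $JI^{r}=I^{r+1}$ for some $r\ge0$; the least such $r$ is the reduction number $\operatorname{red}_J(I)$. *)

theory Defs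
  imports "HOL-Library.Poly_Mapping"
begin

text \<open>Polynomials over a coefficient ring: finitely supported maps from monomials
(exponent vectors) to coefficients. Variables are indexed 0,1,2,...;
the ring k[x_1,...,x_n] is the carrier of polynomials using only variables with index < n.\<close>

type_synonym 'k mpoly = "(nat \<Rightarrow>\<^sub>0 nat) \<Rightarrow>\<^sub>0 'k"

definition Var :: "nat \<Rightarrow> 'k::comm_ring_1 mpoly" where
  "Var i = Poly_Mapping.single (Poly_Mapping.single i 1) 1"

definition polys :: "nat \<Rightarrow> 'k::comm_ring_1 mpoly set" where
  "polys n = {p. \<forall>m \<in> Poly_Mapping.keys p. Poly_Mapping.keys (m::nat \<Rightarrow>\<^sub>0 nat) \<subseteq> {..<n}}"

definition is_ideal :: "nat \<Rightarrow> 'k::comm_ring_1 mpoly set \<Rightarrow> bool" where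
  "is_ideal n I \<longleftrightarrow> I \<subseteq> polys n \<and> 0 \<in> I \<and>
     (\<forall>x\<in>I. \<forall>y\<in>I. x + y \<in> I) \<and> (\<forall>r\<in>polys n. \<forall>x\<in>I. r * x \<in> I)"

definition gen_ideal :: "nat \<Rightarrow> 'k::comm_ring_1 mpoly set \<Rightarrow> 'k mpoly set" where
  "gen_ideal n S = \<Inter>{I. is_ideal n I \<and> S \<subseteq> I}"

definition ideal_prod :: "nat \<Rightarrow> 'k::comm_ring_1 mpoly set \<Rightarrow> 'k mpoly set \<Rightarrow> 'k mpoly set" where
  "ideal_prod n I J = gen_ideal n {x * y | x y. x \<in> I \<and> y \<in> J}"

fun ideal_pow :: "nat \<Rightarrow> 'k::comm_ring_1 mpoly set \<Rightarrow> nat \<Rightarrow> 'k mpoly set" where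
  "ideal_pow n I 0 = polys n"
| "ideal_pow n I (Suc r) = ideal_prod n I (ideal_pow n I r)"

definition is_reduction :: "nat \<Rightarrow> 'k::comm_ring_1 mpoly set \<Rightarrow> 'k mpoly set \<Rightarrow> bool" where
  "is_reduction n J I \<longleftrightarrow> is_ideal n J \<and> J \<subseteq> I \<and>
     (\<exists>r. ideal_prod n J (ideal_pow n I r) = ideal_pow n I (Suc r))"

definition red_num :: "nat \<Rightarrow> 'k::comm_ring_1 mpoly set \<Rightarrow> 'k mpoly set \<Rightarrow> nat" where
  "red_num n J I = (LEAST r. ideal_prod n J (ideal_pow n I r) = ideal_pow n I (Suc r))"

definition minimal_reduction :: "nat \<Rightarrow> 'k::comm_ring_1 mpoly set \<Rightarrow> 'k mpoly set \<Rightarrow> bool" where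
  "minimal_reduction n J I \<longleftrightarrow> is_reduction n J I \<and>
     (\<forall>K. is_reduction n K I \<and> K \<subseteq> J \<longrightarrow> K = J)"

end

theory Submission
  imports Defs
begin

text \<open>
  Every power \<open>I^r\<close> is generated by the monomials \<open>x^(a c) (x_1\<cdots>x_n)^(b j)\<close> with
  \<open>\<Sum>c + j = r\<close>, so the equations \<open>J I^r = I^(r+1)\<close> can be decided on exponents:
  \<open>(x_1\<cdots>x_n)^(b (r+1))\<close> lies in \<open>J I^r\<close> only if \<open>a \<le> min (r+1) n * b\<close>,
  and conversely \<open>a \<le> (r+1) b\<close> lets every generator of \<open>I^(r+1)\<close> absorb a pure power \<open>x_i^a\<close>.
  For \<open>Q\<close>, the exchange \<open>x_i^a x^(a c) = (x_i^a - x_j^a) x^(a c) + x_j^a x^(a c)\<close> moves every pure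
  generator of \<open>I^n\<close> towards \<open>(x_1\<cdots>x_n)^a \<in> (x_1\<cdots>x_n)^b I^(n-1)\<close> (as \<open>n b \<le> a\<close>), giving
  \<open>Q I^(n-1) = I^n\<close>; a linear functional that is invariant under \<open>x_i^a \<leftrightarrow> x_j^a\<close> and kills the
  multiples of \<open>(x_1\<cdots>x_n)^b\<close> vanishes on \<open>Q\<close> but not on \<open>x_1^(a (r+1)) \<in> I^(r+1)\<close> for
  \<open>r + 1 < n\<close>, so no smaller reduction number occurs.

  Minimality: if \<open>K \<subseteq> P\<close> (\<open>P = J\<close> or \<open>Q\<close>) is a reduction of \<open>I\<close>, then for every nonzero \<open>\<lambda>\<close> a
  functional on \<open>K I^r\<close> that factors through the \<open>\<lambda>\<close>-combination of the initial coefficients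
  of \<open>K\<close> does not vanish, so the initial forms of \<open>K\<close> span those of the generators of \<open>P\<close> (for
  \<open>Q\<close> with respect to suitable weights); since \<open>K\<close> also contains all monomials of large degree,
  a graded Nakayama argument yields \<open>K = P\<close>.
\<close>

abbreviation lookup :: "('a \<Rightarrow>\<^sub>0 'b::zero) \<Rightarrow> 'a \<Rightarrow> 'b" where
  "lookup \<equiv> Poly_Mapping.lookup"
abbreviation keys :: "('a \<Rightarrow>\<^sub>0 'b::zero) \<Rightarrow> 'a set" where
  "keys \<equiv> Poly_Mapping.keys"

lemma keys_add_nat: "keys ((d::nat \<Rightarrow>\<^sub>0 nat) + e) = keys d \<union> keys e"
  by (auto simp: in_keys_iff lookup_add)

lemma polys_iff: "p \<in> polys n \<longleftrightarrow> (\<forall>m\<in>keys p. keys m \<subseteq> {..<n})"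
  by (simp add: polys_def)

lemma polys_0 [simp]: "0 \<in> polys n"
  by (simp add: polys_def)

lemma polys_one [simp]: "1 \<in> polys n"
  by (simp add: polys_def)

lemma polys_single: "keys e \<subseteq> {..<n} \<Longrightarrow> Poly_Mapping.single e c \<in> polys n"
  by (simp add: polys_def)

lemma polys_add: "p \<in> polys n \<Longrightarrow> q \<in> polys n \<Longrightarrow> p + q \<in> polys n"
  unfolding polys_def using keys_add[of p q] by auto

lemma polys_uminus: "p \<in> polys n \<Longrightarrow> - p \<in> polys n"
  unfolding polys_def by (auto simp: in_keys_iff)

lemma polys_diff: "p \<in> polys n \<Longrightarrow> q \<in> polys n \<Longrightarrow> p - q \<in> polys n"
  unfolding diff_conv_add_uminus by (intro polys_add polys_uminus)

lemma polys_mult: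
  assumes "p \<in> polys n" and "q \<in> polys n"
  shows "p * q \<in> polys n"
proof -
  have "keys m \<subseteq> {..<n}" if m: "m \<in> keys (p * q)" for m
  proof -
    obtain d e where "m = d + e" "d \<in> keys p" "e \<in> keys q"
      using m keys_mult[of p q] by auto
    then show ?thesis using assms by (auto simp: polys_def keys_add_nat)
  qed
  then show ?thesis by (simp add: polys_def)
qed

lemma is_ideal_polys: "is_ideal n (polys n)"
  by (auto simp: is_ideal_def intro: polys_add polys_mult)

lemma ideal_subset_polys: "is_ideal n I \<Longrightarrow> I \<subseteq> polys n"
  by (simp add: is_ideal_def)

lemma ideal_zero: "is_ideal n I \<Longrightarrow> 0 \<in> I"
  by (simp add: is_ideal_def)

lemma ideal_add: "is_ideal n I \<Longrightarrow> x \<in> I \<Longrightarrow> y \<in> I \<Longrightarrow> x + y \<in> I"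
  by (simp add: is_ideal_def)

lemma ideal_mult_left: "is_ideal n I \<Longrightarrow> r \<in> polys n \<Longrightarrow> x \<in> I \<Longrightarrow> r * x \<in> I"
  by (simp add: is_ideal_def)

lemma ideal_mult_right: "is_ideal n I \<Longrightarrow> r \<in> polys n \<Longrightarrow> x \<in> I \<Longrightarrow> x * r \<in> I"
  by (metis ideal_mult_left mult.commute)

lemma ideal_uminus: "is_ideal n I \<Longrightarrow> x \<in> I \<Longrightarrow> - x \<in> I"
  using ideal_mult_left[of n I "- 1" x] by (simp add: polys_uminus)

lemma ideal_diff: "is_ideal n I \<Longrightarrow> x \<in> I \<Longrightarrow> y \<in> I \<Longrightarrow> x - y \<in> I"
  unfolding diff_conv_add_uminus by (intro ideal_add ideal_uminus)

lemma ideal_sum: "is_ideal n I \<Longrightarrow> (\<And>i. i \<in> A \<Longrightarrow> f i \<in> I) \<Longrightarrow> sum f A \<in> I"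
  by (induction A rule: infinite_finite_induct) (auto intro: ideal_add ideal_zero)

lemma is_ideal_mult_preimage: "is_ideal n M \<Longrightarrow> is_ideal n {p \<in> polys n. q * p \<in> M}"
proof -
  assume M: "is_ideal n M"
  have "q * (r * x) \<in> M" if "r \<in> polys n" "q * x \<in> M" for r x
    using ideal_mult_left[OF M that] by (simp add: mult.left_commute)
  then show ?thesis
    using M by (auto simp: is_ideal_def distrib_left intro: polys_add polys_mult)
qed

lemma is_ideal_gen_ideal: "S \<subseteq> polys n \<Longrightarrow> is_ideal n (gen_ideal n S)"
  unfolding gen_ideal_def using is_ideal_polys[of n] by (auto simp: is_ideal_def)

lemma gen_ideal_base: "S \<subseteq> gen_ideal n S"
  unfolding gen_ideal_def by auto

lemma gen_ideal_minimal: "is_ideal n I \<Longrightarrow> S \<subseteq> I \<Longrightarrow> gen_ideal n S \<subseteq> I"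
  unfolding gen_ideal_def by auto

lemma gen_ideal_mult_mem:
  assumes M: "is_ideal n M" and S: "S \<subseteq> polys n" and T: "T \<subseteq> polys n"
    and gens: "\<And>s t. s \<in> S \<Longrightarrow> t \<in> T \<Longrightarrow> s * t \<in> M"
    and x: "x \<in> gen_ideal n S" and y: "y \<in> gen_ideal n T"
  shows "x * y \<in> M"
proof -
  have "gen_ideal n T \<subseteq> {t \<in> polys n. s * t \<in> M}" if "s \<in> S" for s
    using T gens that by (intro gen_ideal_minimal is_ideal_mult_preimage[OF M]) auto
  then have "gen_ideal n S \<subseteq> {s \<in> polys n. y * s \<in> M}"
    using S y by (intro gen_ideal_minimal is_ideal_mult_preimage[OF M]) (auto simp: mult.commute)
  then show ?thesis using x by (auto simp: mult.commute)
qed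

lemma is_ideal_ideal_prod: "is_ideal n A \<Longrightarrow> is_ideal n B \<Longrightarrow> is_ideal n (ideal_prod n A B)"
  unfolding ideal_prod_def
  by (rule is_ideal_gen_ideal) (auto dest!: ideal_subset_polys intro: polys_mult)

lemma ideal_prod_mem: "x \<in> A \<Longrightarrow> y \<in> B \<Longrightarrow> x * y \<in> ideal_prod n A B"
  unfolding ideal_prod_def by (rule subsetD[OF gen_ideal_base]) auto

lemma ideal_prod_minimal:
  "is_ideal n M \<Longrightarrow> (\<And>x y. x \<in> A \<Longrightarrow> y \<in> B \<Longrightarrow> x * y \<in> M) \<Longrightarrow> ideal_prod n A B \<subseteq> M"
  unfolding ideal_prod_def by (rule gen_ideal_minimal) auto

lemma ideal_prod_subset_left: "is_ideal n A \<Longrightarrow> is_ideal n B \<Longrightarrow> ideal_prod n A B \<subseteq> A"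
  by (rule ideal_prod_minimal) (auto intro: ideal_mult_right dest: ideal_subset_polys)

lemma ideal_prod_mono:
  "is_ideal n A' \<Longrightarrow> is_ideal n B' \<Longrightarrow> A \<subseteq> A' \<Longrightarrow> B \<subseteq> B' \<Longrightarrow>
    ideal_prod n A B \<subseteq> ideal_prod n A' B'"
  by (rule ideal_prod_minimal) (auto intro: is_ideal_ideal_prod ideal_prod_mem)

lemma is_ideal_ideal_pow: "is_ideal n I \<Longrightarrow> is_ideal n (ideal_pow n I r)"
  by (induction r) (simp_all add: is_ideal_ideal_prod is_ideal_polys)

fun gen_prods :: "'k::comm_ring_1 mpoly set \<Rightarrow> nat \<Rightarrow> 'k mpoly set" where
  "gen_prods S 0 = {1}"
| "gen_prods S (Suc r) = {s * g | s g. s \<in> S \<and> g \<in> gen_prods S r}"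

lemma gen_prods_polys: "S \<subseteq> polys n \<Longrightarrow> gen_prods S r \<subseteq> polys n"
  by (induction r) (auto intro: polys_mult)

lemma ideal_pow_gen_ideal_subset:
  assumes S: "S \<subseteq> polys n"
  shows "ideal_pow n (gen_ideal n S) r \<subseteq> gen_ideal n (gen_prods S r)"
proof (induction r)
  case 0
  have "1 \<in> gen_ideal n (gen_prods S 0)"
    using gen_ideal_base[of "gen_prods S 0" n] by simp
  then show ?case
    using ideal_mult_right[OF is_ideal_gen_ideal[OF gen_prods_polys[OF S]]] by fastforce
next
  case (Suc r)
  have P: "is_ideal n (gen_ideal n (gen_prods S (Suc r)))"
    by (rule is_ideal_gen_ideal[OF gen_prods_polys[OF S]])
  show ?case unfolding ideal_pow.simps
  proof (rule ideal_prod_minimal[OF P])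
    fix x y assume x: "x \<in> gen_ideal n S" and "y \<in> ideal_pow n (gen_ideal n S) r"
    then have y: "y \<in> gen_ideal n (gen_prods S r)" using Suc by blast
    have "s * t \<in> gen_ideal n (gen_prods S (Suc r))" if "s \<in> S" "t \<in> gen_prods S r" for s t
      using that by (intro subsetD[OF gen_ideal_base]) auto
    then show "x * y \<in> gen_ideal n (gen_prods S (Suc r))"
      by (rule gen_ideal_mult_mem[OF P S gen_prods_polys[OF S] _ x y])
  qed
qed


definition monom :: "(nat \<Rightarrow>\<^sub>0 nat) \<Rightarrow> 'k::comm_ring_1 mpoly" where
  "monom e = Poly_Mapping.single e 1"

definition polyC :: "'k \<Rightarrow> 'k::comm_ring_1 mpoly" where
  "polyC c = Poly_Mapping.single 0 c"

lemma monom_mult: "monom d * monom e = monom (d + e)"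
  by (simp add: monom_def mult_single)

lemma monom_0: "monom 0 = 1"
  by (simp add: monom_def)

lemma lookup_monom: "lookup (monom e) d = (if d = e then 1 else 0)"
  by (simp add: monom_def lookup_single)

lemma keys_monom [simp]: "keys (monom e :: 'k::comm_ring_1 mpoly) = {e}"
  by (simp add: monom_def)

lemma polys_monom: "keys e \<subseteq> {..<n} \<Longrightarrow> monom e \<in> polys n"
  by (simp add: monom_def polys_single)

lemma polys_polyC: "polyC c \<in> polys n"
  by (simp add: polyC_def polys_single)

lemma polyC_0 [simp]: "polyC 0 = 0"
  by (simp add: polyC_def)

lemma polyC_1 [simp]: "polyC 1 = 1"
  by (simp add: polyC_def)

lemma polyC_add: "polyC (x + y) = polyC x + polyC y"
  by (simp add: polyC_def single_add)

lemma polyC_mult: "polyC (x * y) = polyC x * polyC y"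
  by (simp add: polyC_def mult_single)

lemma polyC_mult_monom: "polyC c * monom d = Poly_Mapping.single d c"
  by (simp add: polyC_def monom_def mult_single)

lemma lookup_polyC: "lookup (polyC c) e = (if e = 0 then c else 0)"
  by (simp add: polyC_def lookup_single when_def)

lemma lookup_polyC_mult: "lookup (polyC c * p) e = c * lookup p e"
proof -
  have "polyC c * p = Poly_Mapping.map ((*) c) p"
    by (simp add: polyC_def mult_map_scale_conv_mult)
  then show ?thesis by (simp add: map.rep_eq when_def)
qed

lemma poly_single_expansion: "p = (\<Sum>d\<in>keys p. Poly_Mapping.single d (lookup p d))"
proof (rule poly_mapping_eqI)
  fix e
  have "lookup (\<Sum>d\<in>keys p. Poly_Mapping.single d (lookup p d)) e
      = (\<Sum>d\<in>keys p. if d = e then lookup p d else 0)"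
    by (simp add: lookup_sum lookup_single when_def eq_commute)
  also have "\<dots> = lookup p e"
    by (auto simp: in_keys_iff)
  finally show "lookup p e = lookup (\<Sum>d\<in>keys p. Poly_Mapping.single d (lookup p d)) e" by simp
qed

lemma poly_monom_expansion: "p = (\<Sum>d\<in>keys p. polyC (lookup p d) * monom d)"
  by (subst poly_single_expansion) (simp add: polyC_mult_monom)

lemma mem_ideal_if_monoms_mem:
  assumes K: "is_ideal n K" and p: "p \<in> polys n" and monoms: "\<And>d. d \<in> keys p \<Longrightarrow> monom d \<in> K"
  shows "p \<in> K"
proof -
  have "(\<Sum>d\<in>keys p. polyC (lookup p d) * monom d) \<in> K"
    using monoms by (intro ideal_sum[OF K] ideal_mult_left[OF K polys_polyC])
  then show ?thesis by (subst poly_monom_expansion)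
qed

definition lin_ext :: "((nat \<Rightarrow>\<^sub>0 nat) \<Rightarrow> 'k) \<Rightarrow> 'k::comm_ring_1 mpoly \<Rightarrow> 'k" where
  "lin_ext F p = (\<Sum>e\<in>keys p. lookup p e * F e)"

lemma lin_ext_0 [simp]: "lin_ext F 0 = 0"
  by (simp add: lin_ext_def)

lemma lin_ext_superset:
  "finite A \<Longrightarrow> keys p \<subseteq> A \<Longrightarrow> lin_ext F p = (\<Sum>e\<in>A. lookup p e * F e)"
  unfolding lin_ext_def by (rule sum.mono_neutral_left) (auto simp: in_keys_iff)

lemma lin_ext_add: "lin_ext F (p + q) = lin_ext F p + lin_ext F q"
proof -
  let ?A = "keys p \<union> keys q"
  have "lin_ext F (p + q) = (\<Sum>e\<in>?A. lookup (p + q) e * F e)"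
    by (rule lin_ext_superset) (use keys_add[of p q] in auto)
  also have "\<dots> = (\<Sum>e\<in>?A. lookup p e * F e) + (\<Sum>e\<in>?A. lookup q e * F e)"
    by (simp add: lookup_add distrib_right sum.distrib)
  also have "\<dots> = lin_ext F p + lin_ext F q"
    by (simp add: lin_ext_superset[of ?A p F] lin_ext_superset[of ?A q F])
  finally show ?thesis .
qed

lemma lin_ext_uminus: "lin_ext F (- p) = - lin_ext F p"
  by (simp add: lin_ext_def sum_negf)

lemma lin_ext_diff: "lin_ext F (p - q) = lin_ext F p - lin_ext F q"
  by (simp add: diff_conv_add_uminus lin_ext_add lin_ext_uminus del: add_uminus_conv_diff)

lemma lin_ext_sum: "lin_ext F (sum f A) = (\<Sum>i\<in>A. lin_ext F (f i))"
  by (induction A rule: infinite_finite_induct) (simp_all add: lin_ext_add)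

lemma lin_ext_single: "lin_ext F (Poly_Mapping.single e c) = c * F e"
  by (simp add: lin_ext_def)

lemma lin_ext_monom: "lin_ext F (monom e) = F e"
  by (simp add: monom_def lin_ext_single)

lemma lin_ext_mult:
  "lin_ext F (p * q) = (\<Sum>d\<in>keys p. \<Sum>d'\<in>keys q. lookup p d * lookup q d' * F (d + d'))"
proof -
  have "p * q = (\<Sum>d\<in>keys p. Poly_Mapping.single d (lookup p d))
              * (\<Sum>d'\<in>keys q. Poly_Mapping.single d' (lookup q d'))"
    using poly_single_expansion[of p] poly_single_expansion[of q] by simp
  also have "\<dots> = (\<Sum>d\<in>keys p. \<Sum>d'\<in>keys q. Poly_Mapping.single (d + d') (lookup p d * lookup q d'))"
    by (simp add: sum_product mult_single)
  finally show ?thesis by (simp add: lin_ext_sum lin_ext_single)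
qed

lemma lin_ext_mult_monom: "lin_ext F (h * monom u) = (\<Sum>d\<in>keys h. lookup h d * F (d + u))"
  by (simp add: lin_ext_mult lookup_monom)

lemma lin_ext_mult_factor:
  assumes "\<And>d d'. d \<in> keys k \<Longrightarrow> d' \<in> keys h \<Longrightarrow> F (d + d') = G d * F' d'"
  shows "lin_ext F (k * h) = (\<Sum>d\<in>keys k. lookup k d * G d) * lin_ext F' h"
proof -
  have "lin_ext F (k * h) = (\<Sum>d\<in>keys k. \<Sum>d'\<in>keys h. (lookup k d * G d) * (lookup h d' * F' d'))"
    unfolding lin_ext_mult by (intro sum.cong refl) (simp add: assms mult_ac)
  then show ?thesis by (simp add: sum_product lin_ext_def)
qed


definition expv :: "nat \<Rightarrow> (nat \<Rightarrow> nat) \<Rightarrow> (nat \<Rightarrow>\<^sub>0 nat)" where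
  "expv n v = (\<Sum>i<n. Poly_Mapping.single i (v i))"

lemma lookup_expv: "lookup (expv n v) i = (if i < n then v i else 0)"
  unfolding expv_def lookup_sum by (auto simp: lookup_single when_def)

lemma keys_expv: "keys (expv n v) \<subseteq> {..<n}"
  by (auto simp: in_keys_iff lookup_expv split: if_splits)

lemma expv_add: "expv n v + expv n v' = expv n (\<lambda>i. v i + v' i)"
  by (rule poly_mapping_eqI) (simp add: lookup_add lookup_expv)

lemma expv_cong: "(\<And>i. i < n \<Longrightarrow> v i = v' i) \<Longrightarrow> expv n v = expv n v'"
  by (rule poly_mapping_eqI) (simp add: lookup_expv)

lemma expv_zero: "expv n (\<lambda>_. 0) = 0"
  by (rule poly_mapping_eqI) (simp add: lookup_expv)

lemma single_expv: "i < n \<Longrightarrow> Poly_Mapping.single i k = expv n (\<lambda>j. if j = i then k else 0)"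
  by (rule poly_mapping_eqI) (auto simp: lookup_expv lookup_single when_def)

lemma single_eq_single_iff: "0 < a \<Longrightarrow> Poly_Mapping.single i a = Poly_Mapping.single j (a::nat) \<longleftrightarrow> i = j"
  by (metis lookup_single_eq lookup_single_not_eq neq0_conv)

definition delta :: "nat \<Rightarrow> nat \<Rightarrow> nat" where
  "delta i j = (if j = i then 1 else 0)"

lemma sum_delta: "i < n \<Longrightarrow> sum (delta i) {..<n} = 1"
  by (simp add: delta_def)

lemma sum_mult_delta: "i < n \<Longrightarrow> (\<Sum>k<n. m * delta i k) = m"
  unfolding sum_distrib_left[symmetric] by (simp add: sum_delta)

lemma single_eq_expv_delta: "i < n \<Longrightarrow> Poly_Mapping.single i k = expv n (\<lambda>j. k * delta i j)"
  by (simp add: single_expv delta_def, rule expv_cong, simp)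

lemma split_off_delta:
  fixes c :: "nat \<Rightarrow> nat"
  assumes "i < n" and "0 < c i"
  obtains c' where "\<And>k. c k = c' k + delta i k" and "\<And>k. k \<noteq> i \<Longrightarrow> c' k = c k"
    and "sum c {..<n} = Suc (sum c' {..<n})"
proof
  let ?c' = "c(i := c i - 1)"
  show c: "c k = ?c' k + delta i k" for k
    using assms by (simp add: delta_def)
  show "?c' k = c k" if "k \<noteq> i" for k
    using that by simp
  have "sum c {..<n} = sum (\<lambda>k. ?c' k + delta i k) {..<n}"
    using c by (intro sum.cong) auto
  then show "sum c {..<n} = Suc (sum ?c' {..<n})"
    using assms(1) by (simp add: sum.distrib sum_delta)
qed

lemma sum_pos_ex: "0 < sum (c::nat \<Rightarrow> nat) {..<n} \<Longrightarrow> \<exists>i<n. 0 < c i"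
  by (metis lessThan_iff neq0_conv sum.neutral)

definition wdeg :: "nat \<Rightarrow> (nat \<Rightarrow> nat) \<Rightarrow> (nat \<Rightarrow>\<^sub>0 nat) \<Rightarrow> nat" where
  "wdeg n w e = (\<Sum>i<n. w i * lookup e i)"

lemma wdeg_add: "wdeg n w (d + e) = wdeg n w d + wdeg n w e"
  by (simp add: wdeg_def lookup_add distrib_left sum.distrib)

lemma wdeg_expv: "wdeg n w (expv n v) = (\<Sum>i<n. w i * v i)"
  by (simp add: wdeg_def lookup_expv)

lemma wdeg_single: "i < n \<Longrightarrow> wdeg n w (Poly_Mapping.single i k) = w i * k"
  by (simp add: single_eq_expv_delta wdeg_expv delta_def if_distrib cong: if_cong)

lemma wdeg_ge_deg: "(\<And>i. i < n \<Longrightarrow> 1 \<le> w i) \<Longrightarrow> wdeg n (\<lambda>_. 1) e \<le> wdeg n w e"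
  unfolding wdeg_def by (intro sum_mono) simp

lemma deg_pos:
  assumes "d \<noteq> 0" and "keys d \<subseteq> {..<n}"
  shows "1 \<le> wdeg n (\<lambda>_. 1) d"
proof -
  obtain i where "i \<in> keys d" using assms(1) by (metis all_not_in_conv keys_eq_empty)
  then have "1 \<le> lookup d i" by (simp add: in_keys_iff Suc_le_eq)
  moreover have "lookup d i \<le> (\<Sum>j<n. lookup d j)"
    using assms(2) \<open>i \<in> keys d\<close> by (intro member_le_sum) auto
  ultimately show ?thesis by (simp add: wdeg_def)
qed

definition mdvd :: "(nat \<Rightarrow>\<^sub>0 nat) \<Rightarrow> (nat \<Rightarrow>\<^sub>0 nat) \<Rightarrow> bool" where
  "mdvd d e \<longleftrightarrow> (\<forall>i. lookup d i \<le> lookup e i)"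

lemma mdvd_refl [simp]: "mdvd d d"
  by (simp add: mdvd_def)

lemma mdvd_split: "mdvd d e \<Longrightarrow> e = d + (e - d)"
  by (rule poly_mapping_eqI) (simp add: mdvd_def lookup_add lookup_minus)

lemma mdvd_add: "mdvd d e \<Longrightarrow> mdvd d (e + e')"
  by (auto simp: mdvd_def lookup_add intro: le_add1 order_trans)

lemma mdvd_add_mono: "mdvd d e \<Longrightarrow> mdvd d' e' \<Longrightarrow> mdvd (d + d') (e + e')"
  by (auto simp: mdvd_def lookup_add intro: add_mono)

lemma wdeg_mono: "mdvd d e \<Longrightarrow> wdeg n w d \<le> wdeg n w e"
  unfolding wdeg_def mdvd_def by (intro sum_mono mult_left_mono) auto

lemma wdeg_strict_mono:
  assumes "mdvd d e" "d \<noteq> e" "keys e \<subseteq> {..<n}" "\<And>i. i < n \<Longrightarrow> 0 < w i"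
  shows "wdeg n w d < wdeg n w e"
proof -
  obtain i where "lookup d i \<noteq> lookup e i"
    using assms(2) by (auto simp: poly_mapping_eq_iff fun_eq_iff)
  with assms(1) have lt: "lookup d i < lookup e i" by (simp add: mdvd_def le_neq_implies_less)
  then have "i \<in> keys e" by (auto simp: in_keys_iff)
  then have "i < n" using assms(3) by auto
  show ?thesis unfolding wdeg_def
  proof (rule sum_strict_mono_ex1)
    show "\<forall>x\<in>{..<n}. w x * lookup d x \<le> w x * lookup e x" using assms(1) by (auto simp: mdvd_def)
    show "\<exists>a\<in>{..<n}. w a * lookup d a < w a * lookup e a" using \<open>i < n\<close> lt assms(4) by auto
  qed simp
qed

lemma mdvd_wdeg_eq:
  "mdvd d e \<Longrightarrow> keys e \<subseteq> {..<n} \<Longrightarrow> (\<And>i. i < n \<Longrightarrow> 0 < w i) \<Longrightarrow> wdeg n w e \<le> wdeg n w d \<Longrightarrow> d = e"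
  using wdeg_strict_mono[of d e n w] by fastforce

definition xpow :: "nat \<Rightarrow> nat \<Rightarrow> 'k::comm_ring_1 mpoly" where
  "xpow i k = monom (Poly_Mapping.single i k)"

definition xprod_pow :: "nat \<Rightarrow> nat \<Rightarrow> 'k::comm_ring_1 mpoly" where
  "xprod_pow n b = monom (expv n (\<lambda>_. b))"

lemma Var_power: "Var i ^ k = xpow i k"
  by (induction k)
    (simp_all add: xpow_def Var_def monom_def[symmetric] monom_0 monom_mult single_add[symmetric] add.commute)

lemma monom_expv_mult: "monom (expv n v) * monom (expv n v') = monom (expv n (\<lambda>i. v i + v' i))"
  by (simp add: monom_mult expv_add)

lemma prod_Var_power: "(\<Prod>i<n. Var i) ^ b = (xprod_pow n b :: 'k::comm_ring_1 mpoly)"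
proof -
  have "(\<Prod>i<n. Var i) = (monom (expv n (\<lambda>_. 1)) :: 'k mpoly)"
    by (induction n) (simp_all add: expv_def monom_0 Var_def monom_def[symmetric] monom_mult)
  moreover have "monom (expv n v) ^ k = (monom (expv n (\<lambda>i. k * v i)) :: 'k mpoly)" for v k
    by (induction k) (simp_all add: monom_0 expv_zero monom_expv_mult)
  ultimately show ?thesis by (simp add: xprod_pow_def)
qed

lemma polys_xpow: "i < n \<Longrightarrow> xpow i k \<in> polys n"
  by (simp add: xpow_def polys_monom)

lemma polys_xprod_pow: "xprod_pow n b \<in> polys n"
  by (simp add: xprod_pow_def polys_monom keys_expv)

lemma lookup_xpow: "lookup (xpow i a) e = (if e = Poly_Mapping.single i a then 1 else 0)"
  by (simp add: xpow_def lookup_monom)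

text \<open>The products of \<open>c i\<close> copies of \<open>x_i^a\<close> (for all \<open>i\<close>) and \<open>j\<close> copies of
  \<open>(x_1\<cdots>x_n)^b\<close>; those with \<open>\<Sum>c + j = r\<close> generate \<open>I^r\<close>.\<close>

definition gen_exp :: "nat \<Rightarrow> nat \<Rightarrow> nat \<Rightarrow> (nat \<Rightarrow> nat) \<Rightarrow> nat \<Rightarrow> (nat \<Rightarrow>\<^sub>0 nat)" where
  "gen_exp n a b c j = expv n (\<lambda>i. a * c i + b * j)"

definition gen_monom :: "nat \<Rightarrow> nat \<Rightarrow> nat \<Rightarrow> (nat \<Rightarrow> nat) \<Rightarrow> nat \<Rightarrow> 'k::comm_ring_1 mpoly" where
  "gen_monom n a b c j = monom (gen_exp n a b c j)"

lemma lookup_gen_exp: "i < n \<Longrightarrow> lookup (gen_exp n a b c j) i = a * c i + b * j"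
  by (simp add: gen_exp_def lookup_expv)

lemma gen_exp_add:
  "gen_exp n a b c j + gen_exp n a b c' j' = gen_exp n a b (\<lambda>i. c i + c' i) (j + j')"
  by (simp add: gen_exp_def expv_add algebra_simps)

lemma polys_gen_monom: "gen_monom n a b c j \<in> polys n"
  by (simp add: gen_monom_def gen_exp_def polys_monom keys_expv)

lemma gen_monom_zero: "gen_monom n a b (\<lambda>_. 0) 0 = 1"
  by (simp add: gen_monom_def gen_exp_def expv_zero monom_0)

lemma gen_monom_Suc: "gen_monom n a b c (Suc j) = xprod_pow n b * gen_monom n a b c j"
  unfolding gen_monom_def gen_exp_def xprod_pow_def monom_expv_mult
  by (rule arg_cong[where f = monom], rule expv_cong) simp

lemma gen_monom_add_delta:
  "i < n \<Longrightarrow> gen_monom n a b (\<lambda>k. c k + delta i k) j = xpow i a * gen_monom n a b c j"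
  unfolding gen_monom_def gen_exp_def xpow_def single_eq_expv_delta monom_expv_mult
  by (rule arg_cong[where f = monom], rule expv_cong) (simp add: algebra_simps)


definition I_gens :: "nat \<Rightarrow> nat \<Rightarrow> nat \<Rightarrow> 'k::comm_ring_1 mpoly set" where
  "I_gens n a b = (\<lambda>i. xpow i a) ` {..<n} \<union> {xprod_pow n b}"

definition J_gens :: "nat \<Rightarrow> nat \<Rightarrow> 'k::comm_ring_1 mpoly set" where
  "J_gens n a = (\<lambda>i. xpow i a) ` {..<n}"

definition Q_gens :: "nat \<Rightarrow> nat \<Rightarrow> nat \<Rightarrow> 'k::comm_ring_1 mpoly set" where
  "Q_gens n a b = (\<lambda>i. xpow i a - xpow (n - 1) a) ` {..<n - 1} \<union> {xprod_pow n b}"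

abbreviation ideal_I :: "nat \<Rightarrow> nat \<Rightarrow> nat \<Rightarrow> 'k::comm_ring_1 mpoly set" where
  "ideal_I n a b \<equiv> gen_ideal n (I_gens n a b)"

abbreviation ideal_J :: "nat \<Rightarrow> nat \<Rightarrow> 'k::comm_ring_1 mpoly set" where
  "ideal_J n a \<equiv> gen_ideal n (J_gens n a)"

abbreviation ideal_Q :: "nat \<Rightarrow> nat \<Rightarrow> nat \<Rightarrow> 'k::comm_ring_1 mpoly set" where
  "ideal_Q n a b \<equiv> gen_ideal n (Q_gens n a b)"

lemma I_gens_polys: "I_gens n a b \<subseteq> polys n"
  by (auto simp: I_gens_def polys_xpow polys_xprod_pow)

lemma J_gens_polys: "J_gens n a \<subseteq> polys n"
  by (auto simp: J_gens_def polys_xpow)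

lemma Q_gens_polys: "Q_gens n a b \<subseteq> polys n"
  by (auto simp: Q_gens_def polys_xprod_pow intro!: polys_diff polys_xpow)

lemma is_ideal_I: "is_ideal n (ideal_I n a b)"
  by (rule is_ideal_gen_ideal[OF I_gens_polys])

lemma is_ideal_J: "is_ideal n (ideal_J n a)"
  by (rule is_ideal_gen_ideal[OF J_gens_polys])

lemma is_ideal_Q: "is_ideal n (ideal_Q n a b)"
  by (rule is_ideal_gen_ideal[OF Q_gens_polys])

lemma is_ideal_I_pow: "is_ideal n (ideal_pow n (ideal_I n a b) r)"
  by (rule is_ideal_ideal_pow[OF is_ideal_I])

lemma xpow_in_I: "i < n \<Longrightarrow> xpow i a \<in> ideal_I n a b"
  using gen_ideal_base[of "I_gens n a b" n] by (auto simp: I_gens_def)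

lemma xprod_pow_in_I: "xprod_pow n b \<in> ideal_I n a b"
  using gen_ideal_base[of "I_gens n a b" n] by (auto simp: I_gens_def)

lemma xpow_in_J: "i < n \<Longrightarrow> xpow i a \<in> ideal_J n a"
  using gen_ideal_base[of "J_gens n a" n] by (auto simp: J_gens_def)

lemma xprod_pow_in_Q: "xprod_pow n b \<in> ideal_Q n a b"
  using gen_ideal_base[of "Q_gens n a b" n] by (auto simp: Q_gens_def)

lemma J_subset_I: "ideal_J n a \<subseteq> ideal_I n a b"
  by (rule gen_ideal_minimal[OF is_ideal_I]) (auto simp: J_gens_def xpow_in_I)

lemma Q_subset_I: "1 \<le> n \<Longrightarrow> ideal_Q n a b \<subseteq> ideal_I n a b"
  by (rule gen_ideal_minimal[OF is_ideal_I])
    (auto simp: Q_gens_def xprod_pow_in_I intro!: ideal_diff[OF is_ideal_I] xpow_in_I)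

lemma xpow_diff_in_Q:
  assumes "i < n" and "k < n"
  shows "xpow i a - xpow k a \<in> ideal_Q n a b"
proof -
  have last: "xpow i a - xpow (n - 1) a \<in> ideal_Q n a b" if "i < n" for i
  proof (cases "i = n - 1")
    case True
    then show ?thesis by (simp add: ideal_zero[OF is_ideal_Q])
  next
    case False
    then have "xpow i a - xpow (n - 1) a \<in> Q_gens n a b" using that by (auto simp: Q_gens_def)
    then show ?thesis by (rule subsetD[OF gen_ideal_base])
  qed
  have "xpow i a - xpow k a = (xpow i a - xpow (n - 1) a) - (xpow k a - xpow (n - 1) a)"
    by simp
  then show ?thesis using ideal_diff[OF is_ideal_Q last[OF assms(1)] last[OF assms(2)]] by simp
qed

lemma gen_monom_in_I_pow:
  "sum c {..<n} + j = r \<Longrightarrow> (gen_monom n a b c j :: 'k::comm_ring_1 mpoly) \<in> ideal_pow n (ideal_I n a b) r"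
proof (induction r arbitrary: c j)
  case 0
  show ?case by (simp add: polys_gen_monom)
next
  case (Suc r)
  show ?case
  proof (cases "j = 0")
    case False
    then obtain j' where j: "j = Suc j'" by (cases j) auto
    then have "(gen_monom n a b c j' :: 'k mpoly) \<in> ideal_pow n (ideal_I n a b) r"
      using Suc by simp
    then show ?thesis
      using j by (simp add: gen_monom_Suc ideal_prod_mem xprod_pow_in_I)
  next
    case True
    with Suc.prems obtain i where i: "i < n" "0 < c i" using sum_pos_ex[of c n] by auto
    obtain c' where c: "\<And>k. c k = c' k + delta i k" "\<And>k. k \<noteq> i \<Longrightarrow> c' k = c k"
      "sum c {..<n} = Suc (sum c' {..<n})"
      using split_off_delta[where c = c, OF i] by blast
    have "c = (\<lambda>k. c' k + delta i k)" using c(1) by auto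
    moreover have "(gen_monom n a b c' j :: 'k mpoly) \<in> ideal_pow n (ideal_I n a b) r"
      using Suc c(3) True by simp
    ultimately show ?thesis
      using i by (simp add: gen_monom_add_delta ideal_prod_mem xpow_in_I)
  qed
qed

lemma gen_prods_I_gens:
  "gen_prods (I_gens n a b) r \<subseteq> {gen_monom n a b c j :: 'k::comm_ring_1 mpoly | c j. sum c {..<n} + j = r}"
proof (induction r)
  case 0
  show ?case using gen_monom_zero by (auto intro!: exI[of _ "\<lambda>_. 0"])
next
  case (Suc r)
  show ?case
  proof
    fix z :: "'k mpoly" assume "z \<in> gen_prods (I_gens n a b) (Suc r)"
    then obtain s g where zsg: "z = s * g" "s \<in> I_gens n a b" and "g \<in> gen_prods (I_gens n a b) r"
      by auto
    then have "g \<in> {gen_monom n a b c j | c j. sum c {..<n} + j = r}"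
      using Suc by blast
    then obtain c j where "g = gen_monom n a b c j" "sum c {..<n} + j = r"
      by blast
    with zsg have z: "z = s * gen_monom n a b c j" "s \<in> I_gens n a b" "sum c {..<n} + j = r"
      by simp_all
    show "z \<in> {gen_monom n a b c j | c j. sum c {..<n} + j = Suc r}"
    proof (cases "s = xprod_pow n b")
      case True
      then have "z = gen_monom n a b c (Suc j)" using z by (simp add: gen_monom_Suc)
      then show ?thesis using z(3) by (intro CollectI exI[of _ c] exI[of _ "Suc j"]) simp
    next
      case False
      then obtain i where i: "i < n" "s = xpow i a" using z by (auto simp: I_gens_def)
      then have "z = gen_monom n a b (\<lambda>k. c k + delta i k) j"
        using z by (simp add: gen_monom_add_delta)
      moreover have "sum (\<lambda>k. c k + delta i k) {..<n} + j = Suc r"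
        using z i by (simp add: sum.distrib sum_delta)
      ultimately show ?thesis by blast
    qed
  qed
qed

lemma I_pow_subset_gen_monoms:
  "ideal_pow n (ideal_I n a b) r \<subseteq> gen_ideal n {gen_monom n a b c j :: 'k::comm_ring_1 mpoly | c j. sum c {..<n} + j = r}"
proof -
  have "gen_ideal n (gen_prods (I_gens n a b) r)
      \<subseteq> gen_ideal n {gen_monom n a b c j :: 'k mpoly | c j. sum c {..<n} + j = r}"
  proof (rule gen_ideal_minimal)
    show "is_ideal n (gen_ideal n {gen_monom n a b c j :: 'k mpoly | c j. sum c {..<n} + j = r})"
      by (rule is_ideal_gen_ideal) (auto intro: polys_gen_monom)
  qed (rule subset_trans[OF gen_prods_I_gens gen_ideal_base])
  with ideal_pow_gen_ideal_subset[OF I_gens_polys] show ?thesis by (rule subset_trans)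
qed

lemma I_pow_subset_if_gen_monoms:
  fixes M :: "'k::comm_ring_1 mpoly set"
  assumes M: "is_ideal n M" and gens: "\<And>c j. sum c {..<n} + j = r \<Longrightarrow> gen_monom n a b c j \<in> M"
  shows "ideal_pow n (ideal_I n a b) r \<subseteq> M"
proof -
  have "gen_ideal n {gen_monom n a b c j | c j. sum c {..<n} + j = r} \<subseteq> M"
    using gens by (intro gen_ideal_minimal[OF M]) auto
  with I_pow_subset_gen_monoms show ?thesis by (rule subset_trans)
qed


definition supported :: "nat \<Rightarrow> (nat \<Rightarrow>\<^sub>0 nat) set \<Rightarrow> 'k::comm_ring_1 mpoly set" where
  "supported n U = {p \<in> polys n. keys p \<subseteq> U}"

lemma supportedD: "p \<in> supported n U \<Longrightarrow> d \<in> keys p \<Longrightarrow> d \<in> U"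
  by (auto simp: supported_def)

lemma keys_mult_in:
  assumes "\<And>d d'. d \<in> keys p \<Longrightarrow> d' \<in> keys q \<Longrightarrow> d + d' \<in> U"
  shows "keys (p * q) \<subseteq> U"
  using keys_mult[of p q] assms by auto

lemma is_ideal_supported:
  assumes up: "\<And>d e. d \<in> U \<Longrightarrow> d + e \<in> U"
  shows "is_ideal n (supported n U :: 'k::comm_ring_1 mpoly set)"
  unfolding is_ideal_def supported_def
proof (intro conjI ballI)
  fix x y :: "'k mpoly" assume "x \<in> {p \<in> polys n. keys p \<subseteq> U}" "y \<in> {p \<in> polys n. keys p \<subseteq> U}"
  then show "x + y \<in> {p \<in> polys n. keys p \<subseteq> U}" using keys_add[of x y] by (auto intro: polys_add)
next
  fix r x :: "'k mpoly" assume r: "r \<in> polys n" and x: "x \<in> {p \<in> polys n. keys p \<subseteq> U}"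
  have "keys (r * x) \<subseteq> U"
  proof (rule keys_mult_in)
    fix d d' assume "d \<in> keys r" "d' \<in> keys x"
    then have "d' \<in> U" using x by auto
    then show "d + d' \<in> U" using up[of d' d] by (simp add: add.commute)
  qed
  then show "r * x \<in> {p \<in> polys n. keys p \<subseteq> U}" using r x by (auto intro: polys_mult)
qed auto

lemma ideal_prod_subset_supported:
  assumes up: "\<And>d e. d \<in> W \<Longrightarrow> d + e \<in> W"
    and A: "A \<subseteq> supported n U" and B: "B \<subseteq> supported n V"
    and UV: "\<And>d d'. d \<in> U \<Longrightarrow> d' \<in> V \<Longrightarrow> d + d' \<in> W"
  shows "ideal_prod n A B \<subseteq> supported n W"
proof (rule ideal_prod_minimal[OF is_ideal_supported[OF up]])
  fix x y assume "x \<in> A" "y \<in> B"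
  then have "x \<in> supported n U" "y \<in> supported n V" using A B by auto
  moreover from this have "keys (x * y) \<subseteq> W"
    using UV by (intro keys_mult_in) (auto dest: supportedD)
  ultimately show "x * y \<in> supported n W"
    by (auto simp: supported_def intro: polys_mult)
qed

definition gen_multiples :: "nat \<Rightarrow> nat \<Rightarrow> nat \<Rightarrow> nat \<Rightarrow> nat \<Rightarrow> (nat \<Rightarrow>\<^sub>0 nat) set" where
  "gen_multiples n a b r s =
     {e. \<exists>c j. sum c {..<n} + j = r \<and> s \<le> sum c {..<n} \<and> mdvd (gen_exp n a b c j) e}"

lemma keys_diff_subset: "keys (e - d :: nat \<Rightarrow>\<^sub>0 nat) \<subseteq> keys e"
  by (auto simp: in_keys_iff lookup_minus)

lemma gen_multiples_up: "d \<in> gen_multiples n a b r s \<Longrightarrow> d + e \<in> gen_multiples n a b r s"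
  unfolding gen_multiples_def using mdvd_add by blast

lemma gen_multiples_add:
  assumes "d \<in> gen_multiples n a b r s" and "d' \<in> gen_multiples n a b r' s'"
  shows "d + d' \<in> gen_multiples n a b (r + r') (s + s')"
proof -
  obtain c j where 1: "sum c {..<n} + j = r" "s \<le> sum c {..<n}" "mdvd (gen_exp n a b c j) d"
    using assms(1) unfolding gen_multiples_def by auto
  obtain c' j' where 2: "sum c' {..<n} + j' = r'" "s' \<le> sum c' {..<n}" "mdvd (gen_exp n a b c' j') d'"
    using assms(2) unfolding gen_multiples_def by auto
  have "mdvd (gen_exp n a b (\<lambda>i. c i + c' i) (j + j')) (d + d')"
    using mdvd_add_mono[OF 1(3) 2(3)] by (simp add: gen_exp_add)
  moreover have "sum (\<lambda>i. c i + c' i) {..<n} = sum c {..<n} + sum c' {..<n}"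
    by (simp add: sum.distrib)
  then have "sum (\<lambda>i. c i + c' i) {..<n} + (j + j') = r + r'"
    and "s + s' \<le> sum (\<lambda>i. c i + c' i) {..<n}"
    using 1 2 by simp_all
  ultimately show ?thesis unfolding gen_multiples_def by blast
qed

lemma gen_multiples_0: "e \<in> gen_multiples n a b 0 0"
  unfolding gen_multiples_def
  by (rule CollectI, rule exI[of _ "\<lambda>_. 0"], rule exI[of _ 0]) (simp add: mdvd_def gen_exp_def lookup_expv)

lemma gen_exp_in_gen_multiples:
  "sum c {..<n} + j = r \<Longrightarrow> s \<le> sum c {..<n} \<Longrightarrow> gen_exp n a b c j \<in> gen_multiples n a b r s"
  by (auto simp: gen_multiples_def mdvd_def)

lemma I_supported: "ideal_I n a b \<subseteq> supported n (gen_multiples n a b 1 0)"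
proof (rule gen_ideal_minimal[OF is_ideal_supported[OF gen_multiples_up]])
  have "Poly_Mapping.single i a \<in> gen_multiples n a b 1 0" if "i < n" for i
    using gen_exp_in_gen_multiples[of "delta i" n 0 1 0 a b] that
    by (simp add: sum_delta gen_exp_def single_eq_expv_delta)
  moreover have "expv n (\<lambda>_. b) \<in> gen_multiples n a b 1 0"
    using gen_exp_in_gen_multiples[of "\<lambda>_. 0" n 1 1 0 a b] by (simp add: gen_exp_def)
  ultimately show "I_gens n a b \<subseteq> supported n (gen_multiples n a b 1 0)"
    by (auto simp: I_gens_def supported_def xpow_def xprod_pow_def polys_monom keys_expv)
qed

lemma J_supported: "ideal_J n a \<subseteq> supported n (gen_multiples n a b 1 1)"
proof (rule gen_ideal_minimal[OF is_ideal_supported[OF gen_multiples_up]])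
  have "Poly_Mapping.single i a \<in> gen_multiples n a b 1 1" if "i < n" for i
    using gen_exp_in_gen_multiples[of "delta i" n 0 1 1 a b] that
    by (simp add: sum_delta gen_exp_def single_eq_expv_delta)
  then show "J_gens n a \<subseteq> supported n (gen_multiples n a b 1 1)"
    by (auto simp: J_gens_def supported_def xpow_def polys_monom)
qed

lemma I_pow_supported: "ideal_pow n (ideal_I n a b) r \<subseteq> supported n (gen_multiples n a b r 0)"
proof (induction r)
  case 0
  then show ?case by (auto simp: supported_def gen_multiples_0)
next
  case (Suc r)
  show ?case unfolding ideal_pow.simps
    by (rule ideal_prod_subset_supported[OF gen_multiples_up I_supported Suc])
      (use gen_multiples_add[of _ n a b 1 0 _ r 0] in auto)
qed

lemma J_I_pow_supported:
  "ideal_prod n (ideal_J n a) (ideal_pow n (ideal_I n a b) r) \<subseteq> supported n (gen_multiples n a b (Suc r) 1)"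
  by (rule ideal_prod_subset_supported[OF gen_multiples_up J_supported I_pow_supported])
    (use gen_multiples_add[of _ n a b 1 1 _ r 0] in auto)

lemma monom_in_I_pow:
  assumes "mdvd (gen_exp n a b c j) e" and "keys e \<subseteq> {..<n}" and "sum c {..<n} + j = r"
  shows "(monom e :: 'k::comm_ring_1 mpoly) \<in> ideal_pow n (ideal_I n a b) r"
proof -
  have "keys (e - gen_exp n a b c j) \<subseteq> {..<n}"
    using assms(2) keys_diff_subset by blast
  then have "gen_monom n a b c j * monom (e - gen_exp n a b c j) \<in> ideal_pow n (ideal_I n a b) r"
    using gen_monom_in_I_pow[OF assms(3)] by (intro ideal_mult_right[OF is_ideal_I_pow polys_monom])
  then show ?thesis
    using mdvd_split[OF assms(1)] by (simp add: gen_monom_def monom_mult)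
qed

lemma monom_in_J_I_pow:
  assumes "mdvd (gen_exp n a b c j) e" and "keys e \<subseteq> {..<n}"
    and "sum c {..<n} + j = Suc q" and "0 < sum c {..<n}"
  shows "(monom e :: 'k::comm_ring_1 mpoly) \<in> ideal_prod n (ideal_J n a) (ideal_pow n (ideal_I n a b) q)"
proof -
  obtain i where i: "i < n" "0 < c i" using sum_pos_ex[OF assms(4)] by auto
  obtain c' where c': "\<And>k. c k = c' k + delta i k" "\<And>k. k \<noteq> i \<Longrightarrow> c' k = c k"
    "sum c {..<n} = Suc (sum c' {..<n})"
    using split_off_delta[where c = c, OF i] by blast
  have "gen_exp n a b c j = Poly_Mapping.single i a + gen_exp n a b c' j"
    unfolding gen_exp_def single_eq_expv_delta[OF i(1)] expv_add
    by (rule expv_cong) (simp add: c'(1) algebra_simps)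
  then have e: "e = Poly_Mapping.single i a + (gen_exp n a b c' j + (e - gen_exp n a b c j))"
    using mdvd_split[OF assms(1)] by (simp add: add.assoc)
  have "mdvd (gen_exp n a b c' j) (gen_exp n a b c' j + (e - gen_exp n a b c j))"
    by (simp add: mdvd_def lookup_add)
  moreover have "keys (gen_exp n a b c' j + (e - gen_exp n a b c j)) \<subseteq> {..<n}"
    using assms(2) e by (metis keys_add_nat le_sup_iff)
  ultimately have "(monom (gen_exp n a b c' j + (e - gen_exp n a b c j)) :: 'k mpoly)
      \<in> ideal_pow n (ideal_I n a b) q"
    using assms(3) c'(3) by (intro monom_in_I_pow) auto
  then have "(xpow i a * monom (gen_exp n a b c' j + (e - gen_exp n a b c j)) :: 'k mpoly)
      \<in> ideal_prod n (ideal_J n a) (ideal_pow n (ideal_I n a b) q)"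
    by (rule ideal_prod_mem[OF xpow_in_J[OF i(1)]])
  moreover have "xpow i a * monom (gen_exp n a b c' j + (e - gen_exp n a b c j)) = (monom e :: 'k mpoly)"
    unfolding xpow_def monom_mult by (rule arg_cong[where f = monom]) (rule e[symmetric])
  ultimately show ?thesis by (simp only:)
qed


section \<open>Reduction numbers\<close>

lemma J_reduction_eq:
  assumes "q < n" and "a \<le> Suc q * b"
  shows "ideal_prod n (ideal_J n a) (ideal_pow n (ideal_I n a b) q)
       = (ideal_pow n (ideal_I n a b) (Suc q) :: 'k::comm_ring_1 mpoly set)"
proof
  show "ideal_prod n (ideal_J n a) (ideal_pow n (ideal_I n a b) q) \<subseteq> (ideal_pow n (ideal_I n a b) (Suc q) :: 'k mpoly set)"
    unfolding ideal_pow.simps by (rule ideal_prod_mono[OF is_ideal_I is_ideal_I_pow J_subset_I]) simp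
  show "ideal_pow n (ideal_I n a b) (Suc q) \<subseteq> (ideal_prod n (ideal_J n a) (ideal_pow n (ideal_I n a b) q) :: 'k mpoly set)"
  proof (rule I_pow_subset_if_gen_monoms[OF is_ideal_ideal_prod[OF is_ideal_J is_ideal_I_pow]])
    fix c j assume cj: "sum c {..<n} + j = Suc q"
    have keys: "keys (gen_exp n a b c j) \<subseteq> {..<n}"
      by (simp add: gen_exp_def keys_expv)
    show "(gen_monom n a b c j :: 'k mpoly) \<in> ideal_prod n (ideal_J n a) (ideal_pow n (ideal_I n a b) q)"
    proof (cases "0 < sum c {..<n}")
      case True
      then show ?thesis unfolding gen_monom_def using cj keys by (intro monom_in_J_I_pow) auto
    next
      case False
      then have c0: "\<And>i. i < n \<Longrightarrow> c i = 0" and j: "j = Suc q" using cj by auto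
      \<comment> \<open>\<open>(x_1\<cdots>x_n)^(b(q+1))\<close> is divisible by \<open>x_0^a\<cdots>x_q^a\<close>, since \<open>a \<le> (q + 1) b\<close>\<close>
      let ?c = "\<lambda>i. if i \<le> q then 1 else 0 :: nat"
      have "sum ?c {..<n} = card ({..<n} \<inter> {i. i \<le> q})"
        by (simp add: sum.If_cases)
      also have "{..<n} \<inter> {i. i \<le> q} = {..q}" using assms(1) by auto
      finally have "sum ?c {..<n} + 0 = Suc q" by simp
      moreover have "mdvd (gen_exp n a b ?c 0) (gen_exp n a b c j)"
        using assms(2) c0 by (auto simp: mdvd_def gen_exp_def lookup_expv j mult.commute)
      ultimately show ?thesis
        unfolding gen_monom_def using keys by (intro monom_in_J_I_pow) auto
    qed
  qed
qed

lemma J_reduction_eq_imp: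
  assumes eq: "ideal_prod n (ideal_J n a) (ideal_pow n (ideal_I n a b) r)
             = (ideal_pow n (ideal_I n a b) (Suc r) :: 'k::comm_ring_1 mpoly set)"
  shows "a \<le> n * b" and "\<exists>m. 1 \<le> m \<and> m \<le> Suc r \<and> a \<le> m * b"
proof -
  have "(gen_monom n a b (\<lambda>_. 0) (Suc r) :: 'k mpoly) \<in> ideal_pow n (ideal_I n a b) (Suc r)"
    by (rule gen_monom_in_I_pow) simp
  then have "gen_exp n a b (\<lambda>_. 0) (Suc r) \<in> gen_multiples n a b (Suc r) 1"
    using eq J_I_pow_supported by (force simp: gen_monom_def dest: supportedD)
  then obtain c j where cj: "sum c {..<n} + j = Suc r" "1 \<le> sum c {..<n}"
    "mdvd (gen_exp n a b c j) (gen_exp n a b (\<lambda>_. 0) (Suc r))"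
    unfolding gen_multiples_def by auto
  define m where "m = sum c {..<n}"
  have le: "a * c i \<le> b * m" if "i < n" for i
    using cj(3) that unfolding mdvd_def
    by (metis cj(1) add_le_cancel_right distrib_left lookup_gen_exp m_def mult_0_right add_0)
  obtain i where i: "i < n" "0 < c i" using sum_pos_ex[of c n] cj(2) by auto
  have "a \<le> a * c i" using i by simp
  also have "\<dots> \<le> b * m" using le i by simp
  finally have am: "a \<le> m * b" by (simp add: mult.commute)
  have "a * m = (\<Sum>i<n. a * c i)" by (simp add: m_def sum_distrib_left)
  also have "\<dots> \<le> (\<Sum>i<n. b * m)" by (rule sum_mono) (simp add: le)
  also have "\<dots> = (n * b) * m" by simp
  finally show "a \<le> n * b" using cj(2) m_def by simp
  show "\<exists>m. 1 \<le> m \<and> m \<le> Suc r \<and> a \<le> m * b" using am cj(1,2) m_def by (intro exI[of _ m]) auto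
qed

lemma J_red_num:
  assumes "1 \<le> n" and "a \<le> n * b"
  shows "red_num n (ideal_J n a) (ideal_I n a b :: 'k::comm_ring_1 mpoly set)
       = (LEAST p. 1 \<le> p \<and> p \<le> n \<and> a \<le> p * b) - 1"
proof -
  define p where "p = (LEAST p. 1 \<le> p \<and> p \<le> n \<and> a \<le> p * b)"
  have p: "1 \<le> p" "p \<le> n" "a \<le> p * b"
    using LeastI[of "\<lambda>p. 1 \<le> p \<and> p \<le> n \<and> a \<le> p * b" n] assms by (auto simp: p_def)
  have p_least: "p \<le> m" if "1 \<le> m" "a \<le> m * b" for m
  proof (cases "m \<le> n")
    case True
    then show ?thesis unfolding p_def using that by (intro Least_le) simp
  next
    case False
    then show ?thesis using p(2) by simp
  qed
  show ?thesis
    unfolding red_num_def p_def[symmetric]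
  proof (rule Least_equality)
    show "ideal_prod n (ideal_J n a) (ideal_pow n (ideal_I n a b) (p - 1))
        = (ideal_pow n (ideal_I n a b) (Suc (p - 1)) :: 'k mpoly set)"
      using p by (intro J_reduction_eq) auto
    fix r assume "ideal_prod n (ideal_J n a) (ideal_pow n (ideal_I n a b) r)
        = (ideal_pow n (ideal_I n a b) (Suc r) :: 'k mpoly set)"
    then obtain m where "1 \<le> m" "m \<le> Suc r" "a \<le> m * b"
      using J_reduction_eq_imp(2) by blast
    then show "p - 1 \<le> r" using p_least by fastforce
  qed
qed

lemma gen_monom_ones_in_Q_I_pow:
  assumes n: "1 \<le> n" and ab: "n * b \<le> a" and c1: "\<And>i. i < n \<Longrightarrow> c i = 1"
  shows "(gen_monom n a b c 0 :: 'k::comm_ring_1 mpoly)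
       \<in> ideal_prod n (ideal_Q n a b) (ideal_pow n (ideal_I n a b) (n - 1))"
proof -
  \<comment> \<open>\<open>(x_1\<cdots>x_n)^a\<close> is \<open>(x_1\<cdots>x_n)^b\<close> times a multiple of \<open>(x_1\<cdots>x_n)^(b(n-1))\<close>\<close>
  have "b + b * (n - 1) \<le> a" using n ab by (cases n) (auto simp: algebra_simps)
  then have "b * (n - 1) \<le> a - b" by linarith
  then have "mdvd (gen_exp n a b (\<lambda>_. 0) (n - 1)) (expv n (\<lambda>_. a - b))"
    by (simp add: mdvd_def gen_exp_def lookup_expv)
  then have "(monom (expv n (\<lambda>_. a - b)) :: 'k mpoly) \<in> ideal_pow n (ideal_I n a b) (n - 1)"
    by (intro monom_in_I_pow) (auto simp: keys_expv)
  moreover have "gen_monom n a b c 0 = xprod_pow n b * (monom (expv n (\<lambda>_. a - b)) :: 'k mpoly)"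
    unfolding gen_monom_def gen_exp_def xprod_pow_def monom_expv_mult
    using \<open>b + b * (n - 1) \<le> a\<close> c1 by (intro arg_cong[where f = monom] expv_cong) auto
  ultimately show ?thesis using ideal_prod_mem[OF xprod_pow_in_Q] by simp
qed

lemma pure_gen_monom_in_Q_I_pow:
  assumes n: "1 \<le> n" and ab: "n * b \<le> a" and c: "sum c {..<n} = n"
  shows "(gen_monom n a b c 0 :: 'k::comm_ring_1 mpoly)
       \<in> ideal_prod n (ideal_Q n a b) (ideal_pow n (ideal_I n a b) (n - 1))"
  using c
proof (induction "card {i. i < n \<and> c i = 0}" arbitrary: c rule: less_induct)
  case less
  let ?QI = "ideal_prod n (ideal_Q n a b) (ideal_pow n (ideal_I n a b) (n - 1)) :: 'k mpoly set"
  show ?case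
  proof (cases "\<forall>i<n. c i \<noteq> 0")
    case True
    have "c i = 1" if "i < n" for i
    proof (rule ccontr)
      assume "c i \<noteq> 1"
      then have "sum (\<lambda>_. 1::nat) {..<n} < sum c {..<n}"
        using True that by (intro sum_strict_mono_ex1) (auto simp: Suc_le_eq intro!: bexI[of _ i])
      then show False using less.prems by simp
    qed
    then show ?thesis by (rule gen_monom_ones_in_Q_I_pow[OF n ab])
  next
    case False
    then obtain j0 where j0: "j0 < n" "c j0 = 0" by auto
    \<comment> \<open>since \<open>\<Sum>c = n\<close>, a zero entry forces an entry \<open>\<ge> 2\<close>, which is moved to position \<open>j0\<close>\<close>
    have "\<exists>i<n. 2 \<le> c i"
    proof (rule ccontr)
      assume "\<not> (\<exists>i<n. 2 \<le> c i)"
      then have "\<forall>i<n. c i \<le> 1" by auto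
      then have "sum c {..<n} < sum (\<lambda>_. 1::nat) {..<n}"
        using j0 by (intro sum_strict_mono_ex1) (auto intro!: bexI[of _ j0])
      then show False using less.prems by simp
    qed
    then obtain i0 where i0: "i0 < n" "2 \<le> c i0" by blast
    obtain c1 where c1: "\<And>k. c k = c1 k + delta i0 k" "\<And>k. k \<noteq> i0 \<Longrightarrow> c1 k = c k"
      "sum c {..<n} = Suc (sum c1 {..<n})"
      using split_off_delta[where c = c, OF i0(1)] i0(2) by auto
    define c' where "c' = (\<lambda>k. c1 k + delta j0 k)"
    have Y: "(gen_monom n a b c1 0 :: 'k mpoly) \<in> ideal_pow n (ideal_I n a b) (n - 1)"
      using less.prems c1(3) by (intro gen_monom_in_I_pow) simp
    have "c = (\<lambda>k. c1 k + delta i0 k)" using c1(1) by auto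
    then have "gen_monom n a b c 0 = (xpow i0 a - xpow j0 a) * gen_monom n a b c1 0 + (gen_monom n a b c' 0 :: 'k mpoly)"
      using i0 j0 by (simp add: c'_def gen_monom_add_delta algebra_simps)
    moreover have "(xpow i0 a - xpow j0 a) * (gen_monom n a b c1 0 :: 'k mpoly) \<in> ?QI"
      by (rule ideal_prod_mem[OF xpow_diff_in_Q[OF i0(1) j0(1)] Y])
    moreover have "(gen_monom n a b c' 0 :: 'k mpoly) \<in> ?QI"
    proof (rule less.hyps)
      have "i0 \<noteq> j0" using i0 j0 by auto
      then have zeros: "{i. i < n \<and> c' i = 0} = {i. i < n \<and> c i = 0} - {j0}"
        using c1(1,2) c1(1)[of i0] i0(2) by (auto simp: c'_def delta_def)
      show "card {i. i < n \<and> c' i = 0} < card {i. i < n \<and> c i = 0}"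
        unfolding zeros by (rule card_Diff1_less) (use j0 in auto)
      show "sum c' {..<n} = n"
        using less.prems c1(3) j0(1) by (simp add: c'_def sum.distrib sum_delta)
    qed
    ultimately show ?thesis by (simp add: ideal_add[OF is_ideal_ideal_prod[OF is_ideal_Q is_ideal_I_pow]])
  qed
qed

lemma Q_reduction_eq:
  assumes n: "1 \<le> n" and ab: "n * b \<le> a"
  shows "ideal_prod n (ideal_Q n a b) (ideal_pow n (ideal_I n a b) (n - 1))
       = (ideal_pow n (ideal_I n a b) (Suc (n - 1)) :: 'k::comm_ring_1 mpoly set)"
proof
  show "ideal_prod n (ideal_Q n a b) (ideal_pow n (ideal_I n a b) (n - 1))
      \<subseteq> (ideal_pow n (ideal_I n a b) (Suc (n - 1)) :: 'k mpoly set)"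
    unfolding ideal_pow.simps by (rule ideal_prod_mono[OF is_ideal_I is_ideal_I_pow Q_subset_I[OF n]]) simp
  show "ideal_pow n (ideal_I n a b) (Suc (n - 1))
      \<subseteq> (ideal_prod n (ideal_Q n a b) (ideal_pow n (ideal_I n a b) (n - 1)) :: 'k mpoly set)"
  proof (rule I_pow_subset_if_gen_monoms[OF is_ideal_ideal_prod[OF is_ideal_Q is_ideal_I_pow]])
    fix c j assume cj: "sum c {..<n} + j = Suc (n - 1)"
    show "(gen_monom n a b c j :: 'k mpoly) \<in> ideal_prod n (ideal_Q n a b) (ideal_pow n (ideal_I n a b) (n - 1))"
    proof (cases j)
      case 0
      then show ?thesis using cj n pure_gen_monom_in_Q_I_pow[OF n ab, of c] by simp
    next
      case (Suc j')
      then have "(gen_monom n a b c j' :: 'k mpoly) \<in> ideal_pow n (ideal_I n a b) (n - 1)"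
        using cj by (intro gen_monom_in_I_pow) simp
      then show ?thesis using Suc by (simp add: gen_monom_Suc ideal_prod_mem xprod_pow_in_Q)
    qed
  qed
qed


lemma is_ideal_lin_ext_annihilated:
  "is_ideal n {p \<in> polys n. \<forall>h\<in>polys n. lin_ext F (h * p) = (0 :: 'k::comm_ring_1)}"
proof -
  have "lin_ext F (h * (r * x)) = 0"
    if "r \<in> polys n" "h \<in> polys n" "\<forall>h\<in>polys n. lin_ext F (h * x) = 0" for h r x :: "'k mpoly"
    using that polys_mult[of h n r] by (simp add: mult.assoc[symmetric])
  then show ?thesis
    by (auto simp: is_ideal_def distrib_left lin_ext_add intro: polys_add polys_mult)
qed

lemma lin_ext_vanishes_on_gen_ideal:
  fixes F :: "(nat \<Rightarrow>\<^sub>0 nat) \<Rightarrow> 'k::comm_ring_1"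
  assumes "S \<subseteq> polys n" and "\<And>s h. s \<in> S \<Longrightarrow> h \<in> polys n \<Longrightarrow> lin_ext F (h * s) = 0"
    and "p \<in> gen_ideal n S"
  shows "lin_ext F p = 0"
proof -
  have "gen_ideal n S \<subseteq> {p \<in> polys n. \<forall>h\<in>polys n. lin_ext F (h * p) = 0}"
    using assms(1,2) by (intro gen_ideal_minimal[OF is_ideal_lin_ext_annihilated]) auto
  then show ?thesis using assms(3) polys_one[of n] by fastforce
qed

lemma lin_ext_vanishes_on_ideal_prod:
  fixes F :: "(nat \<Rightarrow>\<^sub>0 nat) \<Rightarrow> 'k::comm_ring_1"
  assumes A: "is_ideal n A" and B: "is_ideal n B"
    and vanish: "\<And>x y. x \<in> A \<Longrightarrow> y \<in> B \<Longrightarrow> lin_ext F (x * y) = 0"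
    and p: "p \<in> ideal_prod n A B"
  shows "lin_ext F p = 0"
proof -
  have "ideal_prod n A B \<subseteq> {p \<in> polys n. \<forall>h\<in>polys n. lin_ext F (h * p) = 0}"
  proof (rule ideal_prod_minimal[OF is_ideal_lin_ext_annihilated])
    fix x y assume x: "x \<in> A" and y: "y \<in> B"
    have "lin_ext F (h * (x * y)) = 0" if "h \<in> polys n" for h
      using vanish[OF ideal_mult_left[OF A that x] y] by (simp add: mult.assoc)
    moreover have "x * y \<in> polys n" using x y A B by (auto dest!: ideal_subset_polys intro: polys_mult)
    ultimately show "x * y \<in> {p \<in> polys n. \<forall>h\<in>polys n. lin_ext F (h * p) = 0}" by simp
  qed
  then show ?thesis using p polys_one[of n] by fastforce
qed

section \<open>The reduction number of Q is at least \<open>n - 1\<close>\<close>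

definition pure_a_exps :: "nat \<Rightarrow> nat \<Rightarrow> nat \<Rightarrow> (nat \<Rightarrow>\<^sub>0 nat) set" where
  "pure_a_exps n a s = {expv n (\<lambda>k. a * c k) | c. sum c {..<n} = s}"

lemma add_single_in_pure_a_exps_iff:
  assumes a: "0 < a" and i: "i < n" and d: "keys d \<subseteq> {..<n}"
  shows "d + Poly_Mapping.single i a \<in> pure_a_exps n a (Suc r) \<longleftrightarrow> d \<in> pure_a_exps n a r"
proof
  assume "d + Poly_Mapping.single i a \<in> pure_a_exps n a (Suc r)"
  then obtain c where c: "sum c {..<n} = Suc r" "d + Poly_Mapping.single i a = expv n (\<lambda>k. a * c k)"
    by (auto simp: pure_a_exps_def)
  have lk: "lookup d k + (if i = k then a else 0) = (if k < n then a * c k else 0)" for k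
    using arg_cong[OF c(2), of "\<lambda>e. lookup e k"] by (simp add: lookup_add lookup_single lookup_expv when_def)
  then have "a \<le> a * c i" using i by (metis le_add2)
  then have "0 < c i" using a by (cases "c i") auto
  then obtain c' where c': "\<And>k. c k = c' k + delta i k" "\<And>k. k \<noteq> i \<Longrightarrow> c' k = c k"
    "sum c {..<n} = Suc (sum c' {..<n})"
    using split_off_delta[where c = c, OF i] by blast
  have "d = expv n (\<lambda>k. a * c' k)"
  proof (rule poly_mapping_eqI)
    fix k
    show "lookup d k = lookup (expv n (\<lambda>k. a * c' k)) k"
    proof (cases "k < n")
      case True
      then show ?thesis using lk[of k] c'(1)[of k]
        by (cases "k = i") (auto simp: lookup_expv delta_def algebra_simps)
    next
      case False
      then show ?thesis using d by (auto simp: lookup_expv in_keys_iff)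
    qed
  qed
  then show "d \<in> pure_a_exps n a r" using c(1) c'(3) by (auto simp: pure_a_exps_def)
next
  assume "d \<in> pure_a_exps n a r"
  then obtain c where c: "sum c {..<n} = r" "d = expv n (\<lambda>k. a * c k)"
    by (auto simp: pure_a_exps_def)
  have "d + Poly_Mapping.single i a = expv n (\<lambda>k. a * (c k + delta i k))"
    unfolding c(2) single_eq_expv_delta[OF i] expv_add by (rule expv_cong) (simp add: algebra_simps)
  moreover have "sum (\<lambda>k. c k + delta i k) {..<n} = Suc r"
    using c i by (simp add: sum.distrib sum_delta)
  ultimately show "d + Poly_Mapping.single i a \<in> pure_a_exps n a (Suc r)"
    by (auto simp: pure_a_exps_def)
qed

lemma add_xprod_exp_notin_pure_a_exps:
  assumes "s < n" and "0 < b"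
  shows "d + expv n (\<lambda>_. b) \<notin> pure_a_exps n a s"
proof
  assume "d + expv n (\<lambda>_. b) \<in> pure_a_exps n a s"
  then obtain c where c: "sum c {..<n} = s" "d + expv n (\<lambda>_. b) = expv n (\<lambda>k. a * c k)"
    by (auto simp: pure_a_exps_def)
  \<comment> \<open>fewer than \<open>n\<close> pure powers leave some variable uncovered\<close>
  have "\<exists>i<n. c i = 0"
  proof (rule ccontr)
    assume "\<not> (\<exists>i<n. c i = 0)"
    then have "sum (\<lambda>_. 1::nat) {..<n} \<le> sum c {..<n}" by (intro sum_mono) (auto simp: Suc_le_eq)
    then show False using c(1) assms(1) by simp
  qed
  then obtain i where "i < n" "c i = 0" by auto
  then show False
    using arg_cong[OF c(2), of "\<lambda>e. lookup e i"] assms(2) by (simp add: lookup_add lookup_expv)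
qed

lemma I_pow_not_subset_Q:
  assumes r: "Suc r < n" and a: "0 < a" and b: "0 < b"
  shows "\<not> ideal_pow n (ideal_I n a b) (Suc r) \<subseteq> (ideal_Q n a b :: 'k::comm_ring_1 mpoly set)"
proof
  assume sub: "ideal_pow n (ideal_I n a b) (Suc r) \<subseteq> (ideal_Q n a b :: 'k mpoly set)"
  define F :: "(nat \<Rightarrow>\<^sub>0 nat) \<Rightarrow> 'k" where "F e = (if e \<in> pure_a_exps n a (Suc r) then 1 else 0)" for e
  \<comment> \<open>\<open>F\<close> is invariant under trading one \<open>x_i^a\<close> for another and kills multiples of \<open>(x_1\<cdots>x_n)^b\<close>,
    so its linear extension vanishes on \<open>Q\<close>\<close>
  have Q_vanish: "lin_ext F p = 0" if "p \<in> ideal_Q n a b" for p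
  proof (rule lin_ext_vanishes_on_gen_ideal[OF Q_gens_polys _ that])
    fix s h :: "'k mpoly" assume s: "s \<in> Q_gens n a b" and h: "h \<in> polys n"
    then have hk: "\<And>d. d \<in> keys h \<Longrightarrow> keys d \<subseteq> {..<n}" by (simp add: polys_iff)
    show "lin_ext F (h * s) = 0"
    proof (cases "s = xprod_pow n b")
      case True
      then show ?thesis
        using add_xprod_exp_notin_pure_a_exps[OF r b] by (simp add: xprod_pow_def lin_ext_mult_monom F_def)
    next
      case False
      then obtain i where i: "i < n - 1" "s = xpow i a - xpow (n - 1) a" using s by (auto simp: Q_gens_def)
      have "F (d + Poly_Mapping.single i a) = F (d + Poly_Mapping.single (n - 1) a)" if "d \<in> keys h" for d
        using add_single_in_pure_a_exps_iff[OF a _ hk[OF that]] i(1) by (simp add: F_def)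
      then show ?thesis
        by (simp add: i(2) right_diff_distrib lin_ext_diff xpow_def lin_ext_mult_monom)
    qed
  qed
  let ?e = "gen_exp n a b (\<lambda>k. Suc r * delta 0 k) 0"
  have sum: "sum (\<lambda>k. Suc r * delta 0 k) {..<n} = Suc r"
    using r by (simp only: sum_mult_delta)
  then have "(gen_monom n a b (\<lambda>k. Suc r * delta 0 k) 0 :: 'k mpoly) \<in> ideal_pow n (ideal_I n a b) (Suc r)"
    by (intro gen_monom_in_I_pow) simp
  then have "(monom ?e :: 'k mpoly) \<in> ideal_pow n (ideal_I n a b) (Suc r)"
    by (simp add: gen_monom_def)
  then have "lin_ext F (monom ?e) = 0" using sub Q_vanish by blast
  moreover have "?e \<in> pure_a_exps n a (Suc r)"
    using sum unfolding pure_a_exps_def gen_exp_def by auto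
  ultimately show False by (simp add: lin_ext_monom F_def)
qed

lemma Q_red_num:
  assumes n: "1 \<le> n" and ab: "n * b \<le> a" and b: "0 < b"
  shows "red_num n (ideal_Q n a b) (ideal_I n a b :: 'k::comm_ring_1 mpoly set) = n - 1"
  unfolding red_num_def
proof (rule Least_equality)
  show "ideal_prod n (ideal_Q n a b) (ideal_pow n (ideal_I n a b) (n - 1))
      = (ideal_pow n (ideal_I n a b) (Suc (n - 1)) :: 'k mpoly set)"
    by (rule Q_reduction_eq[OF n ab])
  fix r assume eq: "ideal_prod n (ideal_Q n a b) (ideal_pow n (ideal_I n a b) r)
      = (ideal_pow n (ideal_I n a b) (Suc r) :: 'k mpoly set)"
  show "n - 1 \<le> r"
  proof (rule ccontr)
    assume "\<not> n - 1 \<le> r"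
    moreover have "0 < n * b" using n b by simp
    then have "0 < a" using ab by (rule less_le_trans)
    ultimately have "\<not> ideal_pow n (ideal_I n a b) (Suc r) \<subseteq> (ideal_Q n a b :: 'k mpoly set)"
      using b by (intro I_pow_not_subset_Q) auto
    then show False
      using eq ideal_prod_subset_left[OF is_ideal_Q is_ideal_I_pow] by blast
  qed
qed


section \<open>A lemma from linear algebra\<close>

definition lin_closed :: "(nat \<Rightarrow> 'k::field) set \<Rightarrow> bool" where
  "lin_closed W \<longleftrightarrow> (\<lambda>_. 0) \<in> W \<and> (\<forall>u\<in>W. \<forall>v\<in>W. (\<lambda>i. u i + v i) \<in> W) \<and> (\<forall>u\<in>W. \<forall>c. (\<lambda>i. c * u i) \<in> W)"

lemma lin_closed_add: "lin_closed W \<Longrightarrow> u \<in> W \<Longrightarrow> v \<in> W \<Longrightarrow> (\<lambda>i. u i + v i) \<in> W"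
  by (simp add: lin_closed_def)

lemma lin_closed_scale: "lin_closed W \<Longrightarrow> u \<in> W \<Longrightarrow> (\<lambda>i. c * u i) \<in> W"
  by (simp add: lin_closed_def)

lemma lin_closed_diff: "lin_closed W \<Longrightarrow> u \<in> W \<Longrightarrow> v \<in> W \<Longrightarrow> (\<lambda>i. u i - v i) \<in> W"
  using lin_closed_add[of W u "\<lambda>i. (- 1) * v i"] lin_closed_scale[of W v "- 1"] by simp

lemma lin_closed_sum:
  assumes "lin_closed W" and "\<And>l. l \<in> A \<Longrightarrow> f l \<in> W"
  shows "(\<lambda>i. \<Sum>l\<in>A. f l i) \<in> W"
  using assms(2)
proof (induction A rule: infinite_finite_induct)
  case (insert x F)
  then show ?case using lin_closed_add[OF assms(1), of "f x" "\<lambda>i. \<Sum>l\<in>F. f l i"] by simp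
qed (use assms(1) in \<open>simp_all add: lin_closed_def\<close>)

lemma lin_closed_image_ideal:
  assumes K: "is_ideal n K"
  shows "lin_closed ((\<lambda>k l. lookup k (beta l)) ` (K :: 'k::field mpoly set))"
proof -
  have "(\<lambda>l. lookup k1 (beta l) + lookup k2 (beta l)) \<in> (\<lambda>k l. lookup k (beta l)) ` K"
    if "k1 \<in> K" "k2 \<in> K" for k1 k2
    using ideal_add[OF K that] by (auto simp: lookup_add intro!: image_eqI[of _ _ "k1 + k2"])
  moreover have "(\<lambda>l. c * lookup k (beta l)) \<in> (\<lambda>k l. lookup k (beta l)) ` K" if "k \<in> K" for k c
    using ideal_mult_left[OF K polys_polyC that]
    by (auto simp: lookup_polyC_mult intro!: image_eqI[of _ _ "polyC c * k"])
  moreover have "(\<lambda>_. 0) \<in> (\<lambda>k l. lookup k (beta l)) ` K"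
    using ideal_zero[OF K] by (auto intro!: image_eqI[of _ _ 0])
  ultimately show ?thesis by (auto simp: lin_closed_def)
qed

lemma nondegenerate_last_coord_zero:
  fixes W :: "(nat \<Rightarrow> 'k::field) set"
  assumes W: "lin_closed W" and ws: "ws \<in> W" "ws m = 1"
    and nondeg: "\<And>lam. \<exists>i<Suc m. lam i \<noteq> 0 \<Longrightarrow> \<exists>w\<in>W. (\<Sum>i<Suc m. lam i * w i) \<noteq> 0"
    and lam: "\<exists>i<m. lam i \<noteq> 0"
  shows "\<exists>u\<in>{u \<in> W. u m = 0}. (\<Sum>i<m. lam i * u i) \<noteq> 0"
proof -
  define lam' where "lam' = lam(m := - (\<Sum>i<m. lam i * ws i))"
  have "\<exists>i<Suc m. lam' i \<noteq> 0" using lam by (auto simp: lam'_def)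
  then obtain w where w: "w \<in> W" "(\<Sum>i<Suc m. lam' i * w i) \<noteq> 0"
    using nondeg by blast
  define u where "u = (\<lambda>i. w i - w m * ws i)"
  have "u \<in> W" unfolding u_def using lin_closed_diff[OF W w(1) lin_closed_scale[OF W ws(1)]] .
  moreover have "u m = 0" using ws by (simp add: u_def)
  moreover have "(\<Sum>i<m. lam i * u i) = (\<Sum>i<Suc m. lam' i * w i)"
  proof -
    have "(\<Sum>i<m. lam' i * w i) = (\<Sum>i<m. lam i * w i)"
      by (rule sum.cong) (auto simp: lam'_def)
    then have "(\<Sum>i<Suc m. lam' i * w i) = (\<Sum>i<m. lam i * w i) - (\<Sum>i<m. lam i * ws i) * w m"
      by (simp add: lam'_def)
    moreover have "(\<Sum>i<m. lam i * u i) = (\<Sum>i<m. lam i * w i) - w m * (\<Sum>i<m. lam i * ws i)"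
      by (simp add: u_def right_diff_distrib sum_subtractf sum_distrib_left mult.left_commute)
    ultimately show ?thesis by (simp add: mult.commute)
  qed
  ultimately show ?thesis using w(2) by auto
qed

lemma lin_closed_eliminate_pivot:
  fixes W :: "(nat \<Rightarrow> 'k::field) set"
  assumes W: "lin_closed W" and ws: "ws \<in> W" "ws m = 1"
    and E: "\<And>k. k < m \<Longrightarrow> E k \<in> W \<and> E k m = 0 \<and> (\<forall>i<m. E k i = (if i = k then 1 else 0))"
  shows "\<exists>v\<in>W. \<forall>i<Suc m. v i = (if i = m then 1 else 0)"
proof -
  define v where "v = (\<lambda>i. ws i - (\<Sum>k<m. ws k * E k i))"
  have "(\<lambda>i. \<Sum>k<m. ws k * E k i) \<in> W"
    using E by (intro lin_closed_sum[OF W] lin_closed_scale[OF W]) auto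
  then have "v \<in> W" unfolding v_def by (rule lin_closed_diff[OF W ws(1)])
  moreover have "v i = (if i = m then 1 else 0)" if "i < Suc m" for i
  proof (cases "i = m")
    case True
    then show ?thesis using E ws(2) by (simp add: v_def)
  next
    case False
    then have "i < m" using that by simp
    then have "(\<Sum>k<m. ws k * E k i) = (\<Sum>k<m. if k = i then ws i else 0)"
      using E by (intro sum.cong) auto
    also have "\<dots> = ws i" using \<open>i < m\<close> by simp
    finally show ?thesis using False by (simp add: v_def)
  qed
  ultimately show ?thesis by blast
qed

text \<open>Vectors in \<open>k^m\<close> are functions \<open>nat \<Rightarrow> k\<close> of which only the values below \<open>m\<close> matter.\<close>

lemma nondegenerate_lin_closed_unit_vectors:
  fixes W :: "(nat \<Rightarrow> 'k::field) set"
  assumes "lin_closed W"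
    and "\<And>lam. \<exists>i<m. lam i \<noteq> 0 \<Longrightarrow> \<exists>w\<in>W. (\<Sum>i<m. lam i * w i) \<noteq> 0"
  shows "\<forall>l<m. \<exists>w\<in>W. \<forall>i<m. w i = (if i = l then 1 else 0)"
  using assms
proof (induction m arbitrary: W)
  case 0
  then show ?case by simp
next
  case (Suc m)
  note W = Suc.prems(1) and nondeg = Suc.prems(2)
  have "\<exists>i<Suc m. (if i = m then 1 else 0 :: 'k) \<noteq> 0" by auto
  then obtain w0 where "w0 \<in> W" "(\<Sum>i<Suc m. (if i = m then 1 else 0) * w0 i) \<noteq> 0"
    using nondeg[of "\<lambda>i. if i = m then 1 else 0"] by blast
  then have w0: "w0 \<in> W" "w0 m \<noteq> 0" by (simp_all add: if_distrib cong: if_cong)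
  define ws where "ws = (\<lambda>i. w0 i / w0 m)"
  have ws: "ws \<in> W" "ws m = 1"
    using lin_closed_scale[OF W w0(1), of "1 / w0 m"] w0(2) by (simp_all add: ws_def)
  let ?W' = "{u \<in> W. u m = 0}"
  have "lin_closed ?W'" using W by (auto simp: lin_closed_def)
  then have "\<forall>l<m. \<exists>w\<in>?W'. \<forall>i<m. w i = (if i = l then 1 else 0)"
    using nondegenerate_last_coord_zero[OF W ws nondeg] by (intro Suc.IH) auto
  then have "\<forall>l\<in>{..<m}. \<exists>w. w \<in> W \<and> w m = 0 \<and> (\<forall>i<m. w i = (if i = l then 1 else 0))"
    by auto
  then obtain E where E: "\<And>l. l < m \<Longrightarrow> E l \<in> W \<and> E l m = 0 \<and> (\<forall>i<m. E l i = (if i = l then 1 else 0))"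
    using bchoice[of "{..<m}"] by (metis lessThan_iff)
  show ?case
  proof (intro allI impI)
    fix l assume l: "l < Suc m"
    show "\<exists>w\<in>W. \<forall>i<Suc m. w i = (if i = l then 1 else 0)"
    proof (cases "l < m")
      case True
      then show ?thesis using E[OF True] by (intro bexI[of _ "E l"]) (auto simp: less_Suc_eq)
    next
      case False
      then have "l = m" using l by simp
      then show ?thesis using lin_closed_eliminate_pivot[OF W ws E] by simp
    qed
  qed
qed

section \<open>A graded Nakayama lemma\<close>

lemma is_ideal_sum_set:
  fixes K M :: "'k::comm_ring_1 mpoly set"
  assumes K: "is_ideal n K" and M: "is_ideal n M"
  shows "is_ideal n {p \<in> polys n. \<exists>k\<in>K. p - k \<in> M}"
  unfolding is_ideal_def
proof (intro conjI ballI)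
  show "0 \<in> {p \<in> polys n. \<exists>k\<in>K. p - k \<in> M}"
    using ideal_zero[OF K] ideal_zero[OF M] by force
  fix x y :: "'k mpoly" assume "x \<in> {p \<in> polys n. \<exists>k\<in>K. p - k \<in> M}" "y \<in> {p \<in> polys n. \<exists>k\<in>K. p - k \<in> M}"
  then obtain k1 k2 where k: "k1 \<in> K" "x - k1 \<in> M" "k2 \<in> K" "y - k2 \<in> M" and xy: "x \<in> polys n" "y \<in> polys n"
    by auto
  have eq: "(x + y) - (k1 + k2) = (x - k1) + (y - k2)" by simp
  have "(x + y) - (k1 + k2) \<in> M" unfolding eq by (rule ideal_add[OF M k(2,4)])
  then show "x + y \<in> {p \<in> polys n. \<exists>k\<in>K. p - k \<in> M}"
    using xy ideal_add[OF K k(1,3)] polys_add by blast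
next
  fix r x :: "'k mpoly" assume r: "r \<in> polys n" and "x \<in> {p \<in> polys n. \<exists>k\<in>K. p - k \<in> M}"
  then obtain k where k: "k \<in> K" "x - k \<in> M" and x: "x \<in> polys n" by auto
  have "r * x - r * k = r * (x - k)" by (simp add: right_diff_distrib)
  then have "r * x - r * k \<in> M" using ideal_mult_left[OF M r k(2)] by simp
  then show "r * x \<in> {p \<in> polys n. \<exists>k\<in>K. p - k \<in> M}"
    using ideal_mult_left[OF K r k(1)] polys_mult[OF r x] by blast
qed auto

text \<open>Ideals generated by elements \<open>g_l\<close> of weighted order \<open>D\<close> whose degree-\<open>D\<close> parts are linearly
  independent, as witnessed by the coefficients at the exponents \<open>beta\<close>.\<close>

locale graded_gens =
  fixes n :: nat and g :: "nat \<Rightarrow> 'k::comm_ring_1 mpoly" and beta :: "nat \<Rightarrow> (nat \<Rightarrow>\<^sub>0 nat)"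
    and w :: "nat \<Rightarrow> nat" and D :: nat
  assumes g_polys: "\<And>l. l < n \<Longrightarrow> g l \<in> polys n"
    and lookup_g_beta: "\<And>l l'. l < n \<Longrightarrow> l' < n \<Longrightarrow> lookup (g l) (beta l') = (if l = l' then 1 else 0)"
    and g_order: "\<And>l d. l < n \<Longrightarrow> d \<in> keys (g l) \<Longrightarrow> D \<le> wdeg n w d"
    and wdeg_beta: "\<And>l. l < n \<Longrightarrow> wdeg n w (beta l) = D"
    and w_pos: "\<And>i. i < n \<Longrightarrow> 0 < w i"
begin

abbreviation P :: "'k mpoly set" where
  "P \<equiv> gen_ideal n (g ` {..<n})"

text \<open>\<open>tail N\<close> is \<open>\<mm>^N P\<close>, where \<open>\<mm>\<close> is the ideal of the variables.\<close>

definition tail :: "nat \<Rightarrow> 'k mpoly set" where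
  "tail N = gen_ideal n {monom e * g l | e l. keys e \<subseteq> {..<n} \<and> N \<le> wdeg n (\<lambda>_. 1) e \<and> l < n}"

definition proj :: "'k mpoly \<Rightarrow> 'k mpoly" where
  "proj q = (\<Sum>l<n. polyC (lookup q (beta l)) * g l)"

lemma is_ideal_P: "is_ideal n P"
  using g_polys by (intro is_ideal_gen_ideal) auto

lemma g_in_P: "l < n \<Longrightarrow> g l \<in> P"
  by (intro subsetD[OF gen_ideal_base]) auto

lemma tail_gens_polys:
  "{monom e * g l | e l. keys e \<subseteq> {..<n} \<and> N \<le> wdeg n (\<lambda>_. 1) e \<and> l < n} \<subseteq> polys n"
  using g_polys by (auto intro!: polys_mult polys_monom)

lemma is_ideal_tail: "is_ideal n (tail N)"
  unfolding tail_def by (rule is_ideal_gen_ideal[OF tail_gens_polys])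

lemma monom_mult_g_in_tail:
  "keys e \<subseteq> {..<n} \<Longrightarrow> N \<le> wdeg n (\<lambda>_. 1) e \<Longrightarrow> l < n \<Longrightarrow> monom e * g l \<in> tail N"
  unfolding tail_def by (intro subsetD[OF gen_ideal_base]) auto

lemma tail_subset_P: "tail N \<subseteq> P"
  unfolding tail_def
  by (rule gen_ideal_minimal[OF is_ideal_P]) (auto intro!: ideal_mult_left[OF is_ideal_P] polys_monom g_in_P)

lemma P_subset_tail_0: "P \<subseteq> tail 0"
  using monom_mult_g_in_tail[of 0 0] by (intro gen_ideal_minimal[OF is_ideal_tail]) (auto simp: monom_0)

lemma tail_supported_if_le:
  assumes "M \<le> N"
  shows "tail N \<subseteq> supported n {d. M + D \<le> wdeg n w d}"
  unfolding tail_def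
proof (rule gen_ideal_minimal[OF is_ideal_supported], simp add: wdeg_add, rule subsetI)
  fix z assume "z \<in> {monom e * g l | e l. keys e \<subseteq> {..<n} \<and> N \<le> wdeg n (\<lambda>_. 1) e \<and> l < n}"
  then obtain e l where z: "z = monom e * g l" "keys e \<subseteq> {..<n}" "N \<le> wdeg n (\<lambda>_. 1) e" "l < n"
    by auto
  have "M \<le> wdeg n w e"
    using assms z(3) wdeg_ge_deg[of n w e] w_pos by (fastforce simp: Suc_le_eq)
  then have "keys z \<subseteq> {d. M + D \<le> wdeg n w d}"
    using g_order[OF z(4)] by (auto simp: z(1) monom_def wdeg_add intro!: keys_mult_in add_mono)
  moreover have "z \<in> polys n" using z g_polys by (auto intro!: polys_mult polys_monom)
  ultimately show "z \<in> supported n {d. M + D \<le> wdeg n w d}" by (simp add: supported_def)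
qed

lemma lookup_beta_tail_1: "p \<in> tail 1 \<Longrightarrow> l < n \<Longrightarrow> lookup p (beta l) = 0"
  using supportedD[OF subsetD[OF tail_supported_if_le[of 1 1]]] wdeg_beta by (force simp: in_keys_iff)

lemma monom_mult_tail:
  assumes d: "keys d \<subseteq> {..<n}" "M \<le> wdeg n (\<lambda>_. 1) d" and p: "p \<in> tail N"
  shows "monom d * p \<in> tail (N + M)"
proof -
  have "tail N \<subseteq> {p \<in> polys n. monom d * p \<in> tail (N + M)}"
    unfolding tail_def[of N]
  proof (rule gen_ideal_minimal[OF is_ideal_mult_preimage[OF is_ideal_tail]], rule subsetI)
    fix z assume "z \<in> {monom e * g l | e l. keys e \<subseteq> {..<n} \<and> N \<le> wdeg n (\<lambda>_. 1) e \<and> l < n}"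
    then obtain e l where z: "z = monom e * g l" "keys e \<subseteq> {..<n}" "N \<le> wdeg n (\<lambda>_. 1) e" "l < n"
      by auto
    have "monom d * z = monom (d + e) * g l" by (simp add: z(1) mult.assoc flip: monom_mult)
    moreover have "keys (d + e) \<subseteq> {..<n}" using d(1) z(2) by (simp add: keys_add_nat)
    moreover have "N + M \<le> wdeg n (\<lambda>_. 1) (d + e)" using d(2) z(3) by (simp add: wdeg_add)
    ultimately have "monom d * z \<in> tail (N + M)" using monom_mult_g_in_tail z(4) by simp
    moreover have "z \<in> polys n" using z g_polys by (auto intro!: polys_mult polys_monom)
    ultimately show "z \<in> {p \<in> polys n. monom d * p \<in> tail (N + M)}" by simp
  qed
  then show ?thesis using p by auto
qed

lemma monom_mult_P_in_tail_1:
  assumes d: "d \<noteq> 0" "keys d \<subseteq> {..<n}" and q: "q \<in> P"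
  shows "monom d * q \<in> tail 1"
proof -
  have "P \<subseteq> {q \<in> polys n. monom d * q \<in> tail 1}"
    using monom_mult_g_in_tail[OF d(2) deg_pos[OF d]] g_polys
    by (intro gen_ideal_minimal[OF is_ideal_mult_preimage[OF is_ideal_tail]]) auto
  then show ?thesis using q by auto
qed

lemma mult_sub_const_in_tail_1:
  assumes r: "r \<in> polys n" and q: "q \<in> P"
  shows "r * q - polyC (lookup r 0) * q \<in> tail 1"
proof -
  have "r - polyC (lookup r 0) = (\<Sum>d\<in>keys r - {0}. polyC (lookup r d) * monom d)"
  proof (rule poly_mapping_eqI)
    fix e
    have "lookup (\<Sum>d\<in>keys r - {0}. polyC (lookup r d) * monom d) e
        = (if e \<in> keys r - {0} then lookup r e else 0)"
      by (simp add: lookup_sum polyC_mult_monom lookup_single when_def if_distrib sum.delta cong: if_cong)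
    also have "\<dots> = lookup (r - polyC (lookup r 0)) e"
      by (auto simp: lookup_minus lookup_polyC in_keys_iff)
    finally show "lookup (r - polyC (lookup r 0)) e = lookup (\<Sum>d\<in>keys r - {0}. polyC (lookup r d) * monom d) e"
      by simp
  qed
  then have "r * q - polyC (lookup r 0) * q = (\<Sum>d\<in>keys r - {0}. polyC (lookup r d) * (monom d * q))"
    by (simp add: left_diff_distrib[symmetric] sum_distrib_right mult.assoc)
  also have "\<dots> \<in> tail 1"
  proof (rule ideal_sum[OF is_ideal_tail])
    fix d assume d: "d \<in> keys r - {0}"
    then have "keys d \<subseteq> {..<n}" using r by (auto simp: polys_iff)
    then have "monom d * q \<in> tail 1" using d q monom_mult_P_in_tail_1 by auto
    then show "polyC (lookup r d) * (monom d * q) \<in> tail 1"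
      by (rule ideal_mult_left[OF is_ideal_tail polys_polyC])
  qed
  finally show ?thesis .
qed

lemma proj_in_P: "proj q \<in> P"
  unfolding proj_def
  by (rule ideal_sum[OF is_ideal_P]) (auto intro: ideal_mult_left[OF is_ideal_P polys_polyC] g_in_P)

lemma proj_add: "proj (x + y) = proj x + proj y"
  by (simp add: proj_def lookup_add polyC_add distrib_right sum.distrib)

lemma proj_eq_g:
  assumes "l < n" and "\<And>l'. l' < n \<Longrightarrow> lookup k (beta l') = (if l = l' then 1 else 0)"
  shows "proj k = g l"
proof -
  have "proj k = (\<Sum>l'<n. if l' = l then g l' else 0)"
    unfolding proj_def using assms(2) by (intro sum.cong) auto
  then show ?thesis using assms(1) by simp
qed

lemma P_sub_proj_in_tail_1: "q \<in> P \<Longrightarrow> q - proj q \<in> tail 1"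
proof -
  let ?A = "{q \<in> polys n. q - proj q \<in> tail 1}"
  have "is_ideal n ?A"
    unfolding is_ideal_def
  proof (intro conjI ballI)
    show "0 \<in> ?A" using ideal_zero[OF is_ideal_tail] by (simp add: proj_def)
    fix x y assume x: "x \<in> ?A" and y: "y \<in> ?A"
    have eq: "(x + y) - proj (x + y) = (x - proj x) + (y - proj y)" by (simp add: proj_add)
    have "(x + y) - proj (x + y) \<in> tail 1"
      unfolding eq using x y by (intro ideal_add[OF is_ideal_tail]) auto
    then show "x + y \<in> ?A" using x y by (auto intro: polys_add)
  next
    fix r x :: "'k mpoly" assume r: "r \<in> polys n" and x: "x \<in> ?A"
    have "x = (x - proj x) + proj x" by simp
    also have "\<dots> \<in> P" using x tail_subset_P by (intro ideal_add[OF is_ideal_P] proj_in_P) auto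
    finally have rx: "r * x - polyC (lookup r 0) * x \<in> tail 1" by (rule mult_sub_const_in_tail_1[OF r])
    have "lookup (r * x) (beta l) = lookup r 0 * lookup x (beta l)" if "l < n" for l
      using lookup_beta_tail_1[OF rx that] by (simp add: lookup_minus lookup_polyC_mult)
    then have "proj (r * x) = polyC (lookup r 0) * proj x"
      unfolding proj_def by (simp add: polyC_mult sum_distrib_left mult.assoc)
    then have "r * x - proj (r * x) = (r * x - polyC (lookup r 0) * x) + polyC (lookup r 0) * (x - proj x)"
      by (simp add: algebra_simps)
    also have "\<dots> \<in> tail 1"
      using x by (intro ideal_add[OF is_ideal_tail] rx ideal_mult_left[OF is_ideal_tail polys_polyC]) auto
    finally show "r * x \<in> ?A" using r x by (auto intro: polys_mult)
  qed auto
  moreover have "g ` {..<n} \<subseteq> ?A"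
    using g_polys proj_eq_g lookup_g_beta ideal_zero[OF is_ideal_tail] by auto
  ultimately show "q \<in> P \<Longrightarrow> q - proj q \<in> tail 1" using gen_ideal_minimal by blast
qed

lemma P_approx_by_ideal:
  assumes K: "is_ideal n K" "K \<subseteq> P"
    and units: "\<And>l. l < n \<Longrightarrow> \<exists>k\<in>K. \<forall>l'<n. lookup k (beta l') = (if l = l' then 1 else 0)"
    and q: "q \<in> P"
  shows "\<exists>k\<in>K. q - k \<in> tail N"
proof -
  have g_approx: "\<exists>k\<in>K. g l - k \<in> tail 1" if l: "l < n" for l
  proof -
    obtain k where k: "k \<in> K" "\<forall>l'<n. lookup k (beta l') = (if l = l' then 1 else 0)"
      using units[OF l] by auto
    then have "k - g l \<in> tail 1"
      using P_sub_proj_in_tail_1[of k] K(2) proj_eq_g[OF l] by auto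
    then have "- (k - g l) \<in> tail 1" by (rule ideal_uminus[OF is_ideal_tail])
    then show ?thesis using k(1) by (intro bexI[of _ k]) auto
  qed
  \<comment> \<open>successive approximation: \<open>tail N \<subseteq> K + tail (N + 1)\<close>\<close>
  have step: "tail N \<subseteq> {p \<in> polys n. \<exists>k\<in>K. p - k \<in> tail (Suc N)}" for N
    unfolding tail_def[of N]
  proof (rule gen_ideal_minimal[OF is_ideal_sum_set[OF K(1) is_ideal_tail]], rule subsetI)
    fix z assume "z \<in> {monom e * g l | e l. keys e \<subseteq> {..<n} \<and> N \<le> wdeg n (\<lambda>_. 1) e \<and> l < n}"
    then obtain e l where z: "z = monom e * g l" "keys e \<subseteq> {..<n}" "N \<le> wdeg n (\<lambda>_. 1) e" "l < n"
      by auto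
    obtain k where k: "k \<in> K" "g l - k \<in> tail 1" using g_approx[OF z(4)] by auto
    have "monom e * (g l - k) \<in> tail (1 + N)" by (rule monom_mult_tail[OF z(2) z(3) k(2)])
    then have "z - monom e * k \<in> tail (Suc N)" by (simp add: z right_diff_distrib)
    moreover have "monom e * k \<in> K" by (rule ideal_mult_left[OF K(1) polys_monom[OF z(2)] k(1)])
    moreover have "z \<in> polys n" using z g_polys by (auto intro!: polys_mult polys_monom)
    ultimately show "z \<in> {p \<in> polys n. \<exists>k\<in>K. p - k \<in> tail (Suc N)}" by auto
  qed
  show ?thesis
  proof (induction N)
    case 0
    then show ?case using q P_subset_tail_0 ideal_zero[OF K(1)] by (auto intro!: bexI[of _ 0])
  next
    case (Suc N)
    then obtain k where k: "k \<in> K" "q - k \<in> tail N" by auto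
    then obtain k' where k': "k' \<in> K" "(q - k) - k' \<in> tail (Suc N)" using step by blast
    have "q - (k + k') = (q - k) - k'" by simp
    then have "q - (k + k') \<in> tail (Suc N)" using k'(2) by (simp only:)
    then show ?case using ideal_add[OF K(1) k(1) k'(1)] by blast
  qed
qed

theorem nakayama:
  assumes K: "is_ideal n K" "K \<subseteq> P"
    and units: "\<And>l. l < n \<Longrightarrow> \<exists>k\<in>K. \<forall>l'<n. lookup k (beta l') = (if l = l' then 1 else 0)"
    and big: "\<And>e. keys e \<subseteq> {..<n} \<Longrightarrow> N \<le> wdeg n (\<lambda>_. 1) e \<Longrightarrow> monom e \<in> K"
  shows "K = P"
proof
  have "tail N \<subseteq> supported n {d. N \<le> wdeg n (\<lambda>_. 1) d}"
    unfolding tail_def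
  proof (rule gen_ideal_minimal[OF is_ideal_supported], simp add: wdeg_add, rule subsetI)
    fix z assume "z \<in> {monom e * g l | e l. keys e \<subseteq> {..<n} \<and> N \<le> wdeg n (\<lambda>_. 1) e \<and> l < n}"
    then obtain e l where z: "z = monom e * g l" "keys e \<subseteq> {..<n}" "N \<le> wdeg n (\<lambda>_. 1) e" "l < n"
      by auto
    have "keys z \<subseteq> {d. N \<le> wdeg n (\<lambda>_. 1) d}"
      unfolding z(1)
    proof (rule keys_mult_in)
      fix d d' assume "d \<in> keys (monom e :: 'k mpoly)"
      then show "d + d' \<in> {d. N \<le> wdeg n (\<lambda>_. 1) d}" using z(3) by (simp add: wdeg_add)
    qed
    moreover have "z \<in> polys n" using z g_polys by (auto intro!: polys_mult polys_monom)
    ultimately show "z \<in> supported n {d. N \<le> wdeg n (\<lambda>_. 1) d}" by (simp add: supported_def)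
  qed
  have tail_K: "tail N \<subseteq> K"
  proof
    fix p assume "p \<in> tail N"
    with \<open>tail N \<subseteq> supported n {d. N \<le> wdeg n (\<lambda>_. 1) d}\<close>
    have p: "p \<in> polys n" "keys p \<subseteq> {d. N \<le> wdeg n (\<lambda>_. 1) d}" by (auto simp: supported_def)
    show "p \<in> K"
      using p big by (intro mem_ideal_if_monoms_mem[OF K(1) p(1)]) (auto simp: polys_iff)
  qed
  show "P \<subseteq> K"
  proof
    fix q assume "q \<in> P"
    then obtain k where "k \<in> K" "q - k \<in> tail N" using P_approx_by_ideal[OF K units] by blast
    then have "(q - k) + k \<in> K" using tail_K by (intro ideal_add[OF K(1)]) auto
    then show "q \<in> K" by simp
  qed
qed (rule K(2))

end


section \<open>Minimality of the reductions\<close>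

lemma sum_coeffs_at:
  fixes lam :: "nat \<Rightarrow> 'k::comm_ring_1"
  shows "(\<Sum>d\<in>keys k. lookup k d * (\<Sum>l<n. if d = beta l then lam l else 0))
       = (\<Sum>l<n. lam l * lookup k (beta l))"
proof -
  have "(\<Sum>d\<in>keys k. lookup k d * (\<Sum>l<n. if d = beta l then lam l else 0))
      = (\<Sum>d\<in>keys k. \<Sum>l<n. if beta l = d then lookup k (beta l) * lam l else 0)"
    unfolding sum_distrib_left by (intro sum.cong refl) auto
  also have "\<dots> = (\<Sum>l<n. \<Sum>d\<in>keys k. if beta l = d then lookup k (beta l) * lam l else 0)"
    by (rule sum.swap)
  also have "\<dots> = (\<Sum>l<n. lam l * lookup k (beta l))"
    by (intro sum.cong refl) (auto simp: in_keys_iff)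
  finally show ?thesis .
qed

lemma coeffs_nonzero_if_lin_ext_nonzero:
  fixes K :: "'k::comm_ring_1 mpoly set"
  assumes K: "is_ideal n K" and M: "is_ideal n M"
    and factor: "\<And>k h d d'. k \<in> K \<Longrightarrow> h \<in> M \<Longrightarrow> d \<in> keys k \<Longrightarrow> d' \<in> keys h \<Longrightarrow>
        F (d + d') = (\<Sum>l<n. if d = beta l then lam l else 0) * F' d'"
    and z: "z \<in> ideal_prod n K M" "lin_ext F z \<noteq> 0"
  shows "\<exists>k\<in>K. (\<Sum>l<n. lam l * lookup k (beta l)) \<noteq> 0"
proof (rule ccontr)
  assume "\<not> ?thesis"
  then have "lin_ext F (x * y) = 0" if "x \<in> K" "y \<in> M" for x y
    using lin_ext_mult_factor[of x y F _ F'] factor[OF that] that by (simp add: sum_coeffs_at)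
  then have "lin_ext F z = 0" by (rule lin_ext_vanishes_on_ideal_prod[OF K M _ z(1)])
  then show False using z(2) by simp
qed

lemma reduction_contains_high_degree_monoms:
  fixes K :: "'k::comm_ring_1 mpoly set"
  assumes K: "is_ideal n K"
    and eq: "ideal_prod n K (ideal_pow n (ideal_I n a b) r) = ideal_pow n (ideal_I n a b) (Suc r)"
    and n: "1 \<le> n" and e: "keys e \<subseteq> {..<n}" "n * (a * Suc r) \<le> wdeg n (\<lambda>_. 1) e"
  shows "monom e \<in> K"
proof -
  have "\<exists>i<n. a * Suc r \<le> lookup e i"
  proof (rule ccontr)
    assume "\<not> ?thesis"
    then have "(\<Sum>i<n. lookup e i) < (\<Sum>i<n. a * Suc r)"
      using n by (intro sum_strict_mono) (auto simp: lessThan_empty_iff)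
    then show False using e(2) by (simp add: wdeg_def)
  qed
  then obtain i where i: "i < n" "a * Suc r \<le> lookup e i" by auto
  have dvd: "mdvd (gen_exp n a b (\<lambda>k. Suc r * delta i k) 0) e"
    using i by (auto simp: mdvd_def gen_exp_def lookup_expv delta_def mult.commute)
  have "sum (\<lambda>k. Suc r * delta i k) {..<n} + 0 = Suc r"
    using i(1) by (simp only: sum_mult_delta add_0_right)
  then have "monom e \<in> ideal_pow n (ideal_I n a b) (Suc r)"
    by (rule monom_in_I_pow[OF dvd e(1)])
  then show ?thesis using eq ideal_prod_subset_left[OF K is_ideal_I_pow] by blast
qed

lemma reduction_eq_gen_ideal_if_nondegenerate:
  fixes K :: "'k::field mpoly set"
  assumes gens: "graded_gens n g beta w D" and n: "1 \<le> n"
    and K: "is_ideal n K" "K \<subseteq> gen_ideal n (g ` {..<n})"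
    and eq: "ideal_prod n K (ideal_pow n (ideal_I n a b) r) = ideal_pow n (ideal_I n a b) (Suc r)"
    and nondeg: "\<And>lam. \<exists>i<n. lam i \<noteq> 0 \<Longrightarrow> \<exists>k\<in>K. (\<Sum>l<n. lam l * lookup k (beta l)) \<noteq> 0"
  shows "K = gen_ideal n (g ` {..<n})"
proof (rule graded_gens.nakayama[OF gens K])
  let ?W = "(\<lambda>k l. lookup k (beta l)) ` K"
  have "\<exists>w\<in>?W. (\<Sum>i<n. lam i * w i) \<noteq> 0" if lam: "\<exists>i<n. lam i \<noteq> 0" for lam
  proof -
    obtain k where "k \<in> K" "(\<Sum>l<n. lam l * lookup k (beta l)) \<noteq> 0" using nondeg[OF lam] by blast
    then show ?thesis by (intro bexI[of _ "\<lambda>l. lookup k (beta l)"]) auto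
  qed
  then have units: "\<forall>l<n. \<exists>w\<in>?W. \<forall>i<n. w i = (if i = l then 1 else 0)"
    by (rule nondegenerate_lin_closed_unit_vectors[OF lin_closed_image_ideal[OF K(1)]])
  show "\<exists>k\<in>K. \<forall>l'<n. lookup k (beta l') = (if l = l' then 1 else 0)" if l: "l < n" for l
  proof -
    obtain k where "k \<in> K" "\<forall>i<n. lookup k (beta i) = (if i = l then 1 else 0)"
      using units l by blast
    then show ?thesis by (metis (full_types))
  qed
  show "monom e \<in> K" if "keys e \<subseteq> {..<n}" "n * (a * Suc r) \<le> wdeg n (\<lambda>_. 1) e" for e
    by (rule reduction_contains_high_degree_monoms[OF K(1) eq n that])
qed


lemma prod_power_delta:
  fixes l n :: nat
  assumes "l < n"
  shows "(\<Prod>i<n. (lam i :: 'k::comm_ring_1) ^ (if i = l then m else 0)) = lam l ^ m"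
proof -
  have "(\<Prod>i<n. lam i ^ (if i = l then m else 0)) = (\<Prod>i<n. if i = l then lam l ^ m else 1)"
    by (intro prod.cong) auto
  also have "\<dots> = lam l ^ m"
    using assms by (subst prod.delta[OF finite_lessThan]) simp
  finally show ?thesis .
qed

lemma J_supported_pure: "ideal_J n a \<subseteq> supported n {d. \<exists>i<n. mdvd (Poly_Mapping.single i a) d}"
proof (rule gen_ideal_minimal[OF is_ideal_supported])
  show "\<And>d e. d \<in> {d. \<exists>i<n. mdvd (Poly_Mapping.single i a) d} \<Longrightarrow> d + e \<in> {d. \<exists>i<n. mdvd (Poly_Mapping.single i a) d}"
    using mdvd_add by blast
  show "J_gens n a \<subseteq> supported n {d. \<exists>i<n. mdvd (Poly_Mapping.single i a) d}"
    by (auto simp: J_gens_def supported_def xpow_def polys_monom)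
qed

lemma deg_ge_if_in_I_pow:
  assumes ab: "a \<le> n * b" and h: "h \<in> ideal_pow n (ideal_I n a b) r" and d: "d \<in> keys h"
  shows "a * r \<le> wdeg n (\<lambda>_. 1) d"
proof -
  obtain c j where cj: "sum c {..<n} + j = r" "mdvd (gen_exp n a b c j) d"
    using supportedD[OF subsetD[OF I_pow_supported h] d] unfolding gen_multiples_def by auto
  have "a * r = a * sum c {..<n} + a * j" using cj(1) by (simp add: distrib_left[symmetric])
  also have "\<dots> \<le> a * sum c {..<n} + (n * b) * j" using ab by simp
  also have "\<dots> = wdeg n (\<lambda>_. 1) (gen_exp n a b c j)"
    by (simp add: gen_exp_def wdeg_expv sum.distrib sum_distrib_left)
  also have "\<dots> \<le> wdeg n (\<lambda>_. 1) d" by (rule wdeg_mono[OF cj(2)])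
  finally show ?thesis .
qed

text \<open>The functional sending \<open>x^(a c)\<close> with \<open>\<Sum>c = s\<close> to \<open>lam^c = \<Prod>i. lam_i^(c_i)\<close> and all
  other monomials to 0.\<close>

definition pure_power_eval :: "nat \<Rightarrow> nat \<Rightarrow> (nat \<Rightarrow> 'k::comm_ring_1) \<Rightarrow> nat \<Rightarrow> (nat \<Rightarrow>\<^sub>0 nat) \<Rightarrow> 'k" where
  "pure_power_eval n a lam s e =
     (if wdeg n (\<lambda>_. 1) e = a * s \<and> (\<forall>i<n. a dvd lookup e i) then (\<Prod>i<n. lam i ^ (lookup e i div a)) else 0)"

lemma pure_power_eval_single:
  assumes "0 < a" and "i < n"
  shows "pure_power_eval n a lam s (Poly_Mapping.single i (s * a)) = lam i ^ s"
proof -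
  have "(\<Prod>j<n. lam j ^ (lookup (Poly_Mapping.single i (s * a)) j div a))
      = (\<Prod>j<n. lam j ^ (if j = i then s else 0))"
    using assms(1) by (intro prod.cong) (auto simp: lookup_single)
  then show ?thesis
    using assms by (simp add: pure_power_eval_def wdeg_single lookup_single when_def mult.commute prod_power_delta)
qed

lemma pure_power_eval_add:
  fixes lam :: "nat \<Rightarrow> 'k::comm_ring_1"
  assumes a: "0 < a" and d: "\<exists>i<n. mdvd (Poly_Mapping.single i a) d" "keys d \<subseteq> {..<n}"
    and d': "a * r \<le> wdeg n (\<lambda>_. 1) d'"
  shows "pure_power_eval n a lam (Suc r) (d + d')
       = (\<Sum>l<n. if d = Poly_Mapping.single l a then lam l else 0) * pure_power_eval n a lam r d'"
proof (cases "\<exists>l<n. d = Poly_Mapping.single l a")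
  case True
  then obtain l where l: "l < n" "d = Poly_Mapping.single l a" by auto
  have G: "(\<Sum>l'<n. if d = Poly_Mapping.single l' a then lam l' else 0) = lam l"
    using l by (simp add: single_eq_single_iff[OF a] if_distrib cong: if_cong)
  have lk: "lookup (d + d') i = (if i = l then a else 0) + lookup d' i" for i
    by (simp add: l(2) lookup_add lookup_single when_def)
  have wdeg: "wdeg n (\<lambda>_. 1) (d + d') = a + wdeg n (\<lambda>_. 1) d'"
    by (simp add: wdeg_add l wdeg_single)
  have "a dvd lookup (d + d') i \<longleftrightarrow> a dvd lookup d' i" for i
    by (cases "i = l") (simp_all add: lk)
  then have dvd: "(\<forall>i<n. a dvd lookup (d + d') i) \<longleftrightarrow> (\<forall>i<n. a dvd lookup d' i)"
    by blast
  show ?thesis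
  proof (cases "wdeg n (\<lambda>_. 1) d' = a * r \<and> (\<forall>i<n. a dvd lookup d' i)")
    case True
    have "lam i ^ (lookup (d + d') i div a) = lam i ^ (if i = l then 1 else 0) * lam i ^ (lookup d' i div a)"
      if "i < n" for i
      using True that a by (auto simp: lk power_add)
    then have "(\<Prod>i<n. lam i ^ (lookup (d + d') i div a)) = lam l * (\<Prod>i<n. lam i ^ (lookup d' i div a))"
      using prod_power_delta[OF l(1), of lam 1] by (simp add: prod.distrib)
    then show ?thesis using True wdeg dvd G by (simp add: pure_power_eval_def)
  next
    case False
    then show ?thesis using wdeg dvd G by (auto simp: pure_power_eval_def)
  qed
next
  case False
  then have G: "(\<Sum>l<n. if d = Poly_Mapping.single l a then lam l else 0) = 0" by (intro sum.neutral) auto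
  obtain i where i: "i < n" "mdvd (Poly_Mapping.single i a) d" using d by auto
  \<comment> \<open>a proper multiple of \<open>x_i^a\<close> is too large in degree\<close>
  then have "a < wdeg n (\<lambda>_. 1) d"
    using False wdeg_strict_mono[OF i(2) _ d(2)] by (force simp: wdeg_single)
  then have "wdeg n (\<lambda>_. 1) (d + d') \<noteq> a * Suc r" using d' by (simp add: wdeg_add)
  then show ?thesis using G by (simp add: pure_power_eval_def)
qed

lemma J_coeffs_nondegenerate:
  fixes K :: "'k::field mpoly set"
  assumes a: "0 < a" and ab: "a \<le> n * b" and K: "is_ideal n K" "K \<subseteq> ideal_J n a"
    and eq: "ideal_prod n K (ideal_pow n (ideal_I n a b) r) = ideal_pow n (ideal_I n a b) (Suc r)"
    and lam: "\<exists>i<n. lam i \<noteq> 0"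
  shows "\<exists>k\<in>K. (\<Sum>l<n. lam l * lookup k (Poly_Mapping.single l a)) \<noteq> 0"
proof -
  obtain i where i: "i < n" "lam i \<noteq> 0" using lam by auto
  \<comment> \<open>the functional is detected by \<open>x_i^(a(r+1))\<close>\<close>
  have "sum (\<lambda>k. Suc r * delta i k) {..<n} + 0 = Suc r"
    using i(1) by (simp only: sum_mult_delta add_0_right)
  then have "(gen_monom n a b (\<lambda>k. Suc r * delta i k) 0 :: 'k mpoly) \<in> ideal_pow n (ideal_I n a b) (Suc r)"
    by (rule gen_monom_in_I_pow)
  moreover have "gen_monom n a b (\<lambda>k. Suc r * delta i k) 0 = (monom (Poly_Mapping.single i (Suc r * a)) :: 'k mpoly)"
    unfolding gen_monom_def gen_exp_def single_eq_expv_delta[OF i(1)]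
    by (intro arg_cong[where f = monom] expv_cong) (simp add: delta_def)
  ultimately have z: "(monom (Poly_Mapping.single i (Suc r * a)) :: 'k mpoly) \<in> ideal_prod n K (ideal_pow n (ideal_I n a b) r)"
    using eq by simp
  show ?thesis
  proof (rule coeffs_nonzero_if_lin_ext_nonzero[OF K(1) is_ideal_I_pow _ z])
    fix k h d d' assume k: "k \<in> K" and h: "h \<in> ideal_pow n (ideal_I n a b) r" and d: "d \<in> keys k" and d': "d' \<in> keys h"
    have "d \<in> {d. \<exists>i<n. mdvd (Poly_Mapping.single i a) d}"
      using supportedD[OF subsetD[OF J_supported_pure subsetD[OF K(2) k]] d] .
    moreover have "k \<in> polys n" using ideal_subset_polys[OF K(1)] k by blast
    then have "keys d \<subseteq> {..<n}" using d by (simp add: polys_iff)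
    ultimately show "pure_power_eval n a lam (Suc r) (d + d')
        = (\<Sum>l<n. if d = Poly_Mapping.single l a then lam l else 0) * pure_power_eval n a lam r d'"
      using pure_power_eval_add[OF a _ _ deg_ge_if_in_I_pow[OF ab h d']] by simp
  next
    show "lin_ext (pure_power_eval n a lam (Suc r)) (monom (Poly_Mapping.single i (Suc r * a))) \<noteq> 0"
      using pure_power_eval_single[OF a i(1), of lam "Suc r"] i(2) by (simp add: lin_ext_monom)
  qed
qed

lemma graded_gens_J:
  assumes "0 < a"
  shows "graded_gens n (\<lambda>l. xpow l a :: 'k::comm_ring_1 mpoly) (\<lambda>l. Poly_Mapping.single l a) (\<lambda>_. 1) a"
proof
  show "lookup (xpow l a :: 'k mpoly) (Poly_Mapping.single l' a) = (if l = l' then 1 else 0)" for l l'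
    using single_eq_single_iff[OF assms, of l' l] by (simp add: lookup_xpow)
  show "a \<le> wdeg n (\<lambda>_. 1) d" if "l < n" "d \<in> keys (xpow l a :: 'k mpoly)" for l d
    using that by (simp add: xpow_def wdeg_single)
qed (simp_all add: polys_xpow wdeg_single)

lemma J_minimal:
  fixes K :: "'k::field mpoly set"
  assumes n: "1 \<le> n" and a: "0 < a" and ab: "a \<le> n * b"
    and red: "is_reduction n K (ideal_I n a b)" and KJ: "K \<subseteq> ideal_J n a"
  shows "K = ideal_J n a"
proof -
  have K: "is_ideal n K" using red by (simp add: is_reduction_def)
  obtain r where eq: "ideal_prod n K (ideal_pow n (ideal_I n a b) r) = ideal_pow n (ideal_I n a b) (Suc r)"
    using red by (auto simp: is_reduction_def)
  show ?thesis
    unfolding J_gens_def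
    by (rule reduction_eq_gen_ideal_if_nondegenerate[OF graded_gens_J[OF a] n K _ eq])
      (use KJ J_coeffs_nondegenerate[OF a ab K KJ eq] in \<open>auto simp: J_gens_def\<close>)
qed

lemma J_minimal_reduction_iff:
  assumes n: "1 \<le> n" and b: "0 < b" and ba: "b < a"
  shows "minimal_reduction n (ideal_J n a) (ideal_I n a b :: 'k::field mpoly set) \<longleftrightarrow> a \<le> n * b"
proof
  assume "minimal_reduction n (ideal_J n a) (ideal_I n a b :: 'k mpoly set)"
  then obtain r where "ideal_prod n (ideal_J n a) (ideal_pow n (ideal_I n a b) r)
      = (ideal_pow n (ideal_I n a b) (Suc r) :: 'k mpoly set)"
    by (auto simp: minimal_reduction_def is_reduction_def)
  then show "a \<le> n * b" by (rule J_reduction_eq_imp(1))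
next
  assume ab: "a \<le> n * b"
  have "ideal_prod n (ideal_J n a) (ideal_pow n (ideal_I n a b) (n - 1))
      = (ideal_pow n (ideal_I n a b) (Suc (n - 1)) :: 'k mpoly set)"
    using n ab by (intro J_reduction_eq) auto
  then have "is_reduction n (ideal_J n a) (ideal_I n a b :: 'k mpoly set)"
    unfolding is_reduction_def using is_ideal_J J_subset_I by blast
  moreover have "0 < a" using b ba by simp
  ultimately show "minimal_reduction n (ideal_J n a) (ideal_I n a b :: 'k mpoly set)"
    unfolding minimal_reduction_def using J_minimal[OF n _ ab] by blast
qed


text \<open>For \<open>n b < a\<close>, the weights \<open>b, \<dots>, b, a - (n - 1) b\<close> give \<open>x_i^a\<close> (\<open>i < n - 1\<close>) and
  \<open>(x_1\<cdots>x_n)^b\<close> the same weighted degree \<open>a b\<close>, while \<open>x_(n-1)^a\<close> is heavier; so the generators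
  of \<open>Q\<close> have initial forms \<open>x_i^a\<close> and \<open>(x_1\<cdots>x_n)^b\<close>.\<close>

definition qweight :: "nat \<Rightarrow> nat \<Rightarrow> nat \<Rightarrow> nat \<Rightarrow> nat" where
  "qweight n a b i = (if i < n - 1 then b else a - (n - 1) * b)"

definition qbeta :: "nat \<Rightarrow> nat \<Rightarrow> nat \<Rightarrow> nat \<Rightarrow> (nat \<Rightarrow>\<^sub>0 nat)" where
  "qbeta n a b l = (if l < n - 1 then Poly_Mapping.single l a else expv n (\<lambda>_. b))"

definition qgen :: "nat \<Rightarrow> nat \<Rightarrow> nat \<Rightarrow> nat \<Rightarrow> 'k::comm_ring_1 mpoly" where
  "qgen n a b l = (if l < n - 1 then xpow l a - xpow (n - 1) a else xprod_pow n b)"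

definition Q_exps :: "nat \<Rightarrow> nat \<Rightarrow> nat \<Rightarrow> (nat \<Rightarrow>\<^sub>0 nat) set" where
  "Q_exps n a b = {d. mdvd (expv n (\<lambda>_. b)) d \<or> (\<exists>i<n. mdvd (Poly_Mapping.single i a) d)}"

text \<open>The functional sending \<open>x^(a c) (x_1\<cdots>x_n)^(b j)\<close> (with \<open>c_(n-1) = 0\<close> and \<open>\<Sum>c + j = s\<close>) to
  \<open>lam^c lam_(n-1)^j\<close>; \<open>j\<close> and \<open>c\<close> are read off the exponent \<open>e\<close> as \<open>j = e_(n-1) / b\<close> and
  \<open>c_i = (e_i - e_(n-1)) / a\<close>.\<close>

definition q_eval :: "nat \<Rightarrow> nat \<Rightarrow> nat \<Rightarrow> (nat \<Rightarrow> 'k::comm_ring_1) \<Rightarrow> nat \<Rightarrow> (nat \<Rightarrow>\<^sub>0 nat) \<Rightarrow> 'k" where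
  "q_eval n a b lam s e =
     (if wdeg n (qweight n a b) e = s * (a * b) \<and> b dvd lookup e (n - 1) \<and>
         (\<forall>i<n - 1. lookup e (n - 1) \<le> lookup e i \<and> a dvd (lookup e i - lookup e (n - 1)))
      then lam (n - 1) ^ (lookup e (n - 1) div b) * (\<Prod>i<n - 1. lam i ^ ((lookup e i - lookup e (n - 1)) div a))
      else 0)"

lemma exists_nonzero_q_monomial:
  fixes lam :: "nat \<Rightarrow> 'k::field"
  assumes lam: "\<exists>i<n. lam i \<noteq> 0"
  obtains c j where "c (n - 1) = 0" "sum c {..<n} + j = Suc r"
    and "lam (n - 1) ^ j * (\<Prod>i<n - 1. lam i ^ c i) \<noteq> 0"
proof (cases "lam (n - 1) = 0")
  case False
  then show ?thesis by (intro that[of "\<lambda>_. 0" "Suc r"]) simp_all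
next
  case True
  obtain l where l0: "l < n" "lam l \<noteq> 0" using lam by blast
  have "l \<noteq> n - 1" using l0(2) \<open>lam (n - 1) = 0\<close> by auto
  then have l: "l < n - 1" "lam l \<noteq> 0" using l0 by simp_all
  have "sum (\<lambda>i. Suc r * delta l i) {..<n} + 0 = Suc r"
    using l0(1) by (simp only: sum_mult_delta add_0_right)
  moreover have "(\<Prod>i<n - 1. lam i ^ (Suc r * delta l i)) = lam l ^ Suc r"
    using prod_power_delta[OF l(1), of lam "Suc r"] by (simp add: delta_def if_distrib cong: if_cong)
  ultimately show ?thesis using l by (intro that[of "\<lambda>i. Suc r * delta l i" 0]) (auto simp: delta_def)
qed

locale Q_setting =
  fixes n a b :: nat
  assumes two_le_n: "2 \<le> n" and b_pos: "0 < b" and nb_less_a: "n * b < a"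
begin

abbreviation W :: "(nat \<Rightarrow>\<^sub>0 nat) \<Rightarrow> nat" where
  "W \<equiv> wdeg n (qweight n a b)"

lemma a_pos: "0 < a"
  using nb_less_a by simp

lemma b_less_last_weight: "b < a - (n - 1) * b"
proof -
  have "n * b = (n - 1) * b + b" using two_le_n by (cases n) auto
  then show ?thesis using nb_less_a by linarith
qed

lemma qweight_pos: "0 < qweight n a b i"
proof -
  have "0 < a - (n - 1) * b" using b_pos b_less_last_weight by linarith
  then show ?thesis using b_pos by (simp add: qweight_def)
qed

lemma b_le_qweight: "b \<le> qweight n a b i"
  using b_less_last_weight by (simp add: qweight_def)

lemma sum_qweight: "(\<Sum>i<n. qweight n a b i) = a"
proof -
  have "n = Suc (n - 1)" using two_le_n by simp
  then have "(\<Sum>i<n. qweight n a b i) = (\<Sum>i<n - 1. qweight n a b i) + qweight n a b (n - 1)"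
    by (metis sum.lessThan_Suc)
  also have "\<dots> = (n - 1) * b + (a - (n - 1) * b)" by (simp add: qweight_def)
  finally show ?thesis using b_less_last_weight by simp
qed

lemma wdeg_xprod_exp: "W (expv n (\<lambda>_. b)) = a * b"
  by (simp add: wdeg_expv sum_distrib_right[symmetric] sum_qweight)

lemma wdeg_single_ge: "i < n \<Longrightarrow> a * b \<le> W (Poly_Mapping.single i a)"
  using b_le_qweight[of i] by (simp add: wdeg_single mult.commute)

lemma wdeg_single_last: "a * b < W (Poly_Mapping.single (n - 1) a)"
  using two_le_n b_less_last_weight a_pos by (simp add: wdeg_single qweight_def mult.commute)

lemma xprod_exp_ne_single: "expv n (\<lambda>_. b) \<noteq> Poly_Mapping.single l a"
proof
  assume eq: "expv n (\<lambda>_. b) = Poly_Mapping.single l a"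
  define i where "i = (if l = 0 then 1 else 0::nat)"
  have "i < n" "i \<noteq> l" using two_le_n by (auto simp: i_def)
  then show False using arg_cong[OF eq, of "\<lambda>e. lookup e i"] b_pos by (simp add: lookup_expv lookup_single)
qed

lemma wdeg_qbeta: "l < n \<Longrightarrow> W (qbeta n a b l) = a * b"
  by (simp add: qbeta_def wdeg_xprod_exp wdeg_single qweight_def mult.commute)

lemma qbeta_eq_iff:
  assumes "l < n" and "l' < n"
  shows "qbeta n a b l = qbeta n a b l' \<longleftrightarrow> l = l'"
proof
  assume eq: "qbeta n a b l = qbeta n a b l'"
  show "l = l'"
  proof (cases "l < n - 1"; cases "l' < n - 1")
    assume "l < n - 1" "l' < n - 1"
    then show ?thesis using eq single_eq_single_iff[OF a_pos, of l l'] by (simp add: qbeta_def)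
  next
    assume "l < n - 1" "\<not> l' < n - 1"
    then show ?thesis using eq xprod_exp_ne_single[of l] by (simp add: qbeta_def)
  next
    assume "\<not> l < n - 1" "l' < n - 1"
    then show ?thesis using eq xprod_exp_ne_single[of l'] by (simp add: qbeta_def)
  next
    assume "\<not> l < n - 1" "\<not> l' < n - 1"
    then show ?thesis using assms by simp
  qed
qed simp

lemma Q_exps_wdeg:
  assumes d: "d \<in> Q_exps n a b" "keys d \<subseteq> {..<n}"
  shows "a * b \<le> W d" and "W d = a * b \<Longrightarrow> \<exists>l<n. d = qbeta n a b l"
proof -
  have wpos: "\<And>i. i < n \<Longrightarrow> 0 < qweight n a b i" using qweight_pos by simp
  consider (b) "mdvd (expv n (\<lambda>_. b)) d" | (a) i where "i < n" "mdvd (Poly_Mapping.single i a) d"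
    using d(1) by (auto simp: Q_exps_def)
  then have "a * b \<le> W d \<and> (W d = a * b \<longrightarrow> (\<exists>l<n. d = qbeta n a b l))"
  proof cases
    case b
    have "W d = a * b \<Longrightarrow> d = qbeta n a b (n - 1)"
      using mdvd_wdeg_eq[where w = "qweight n a b", OF b d(2) wpos] wdeg_xprod_exp by (simp add: qbeta_def)
    moreover have "n - 1 < n" using two_le_n by simp
    moreover have "a * b \<le> W d" using wdeg_mono[OF b, of n "qweight n a b"] wdeg_xprod_exp by simp
    ultimately show ?thesis by blast
  next
    case (a i)
    have le: "a * b \<le> W (Poly_Mapping.single i a)" by (rule wdeg_single_ge[OF a(1)])
    have "\<exists>l<n. d = qbeta n a b l" if "W d = a * b"
    proof -
      have "Poly_Mapping.single i a = d"
        using mdvd_wdeg_eq[where w = "qweight n a b", OF a(2) d(2) wpos] le that by simp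
      moreover have "i \<noteq> n - 1"
        using wdeg_single_last wdeg_mono[OF a(2), of n "qweight n a b"] that by auto
      ultimately show ?thesis using a(1) by (intro exI[of _ i]) (auto simp: qbeta_def)
    qed
    then show ?thesis using le wdeg_mono[OF a(2), of n "qweight n a b"] by simp
  qed
  then show "a * b \<le> W d" and "W d = a * b \<Longrightarrow> \<exists>l<n. d = qbeta n a b l" by auto
qed

lemma wdeg_gen_exp: "W (gen_exp n a b c j) = a * (\<Sum>i<n. qweight n a b i * c i) + a * b * j"
proof -
  have "W (gen_exp n a b c j) = (\<Sum>i<n. a * (qweight n a b i * c i) + (b * j) * qweight n a b i)"
    by (simp add: gen_exp_def wdeg_expv algebra_simps)
  also have "\<dots> = a * (\<Sum>i<n. qweight n a b i * c i) + (b * j) * (\<Sum>i<n. qweight n a b i)"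
    by (simp add: sum.distrib sum_distrib_left)
  finally show ?thesis by (simp add: sum_qweight)
qed

lemma weighted_sum_ge: "b * sum c {..<n} \<le> (\<Sum>i<n. qweight n a b i * c i)"
  unfolding sum_distrib_left by (intro sum_mono) (simp add: b_le_qweight)

lemma weighted_sum_eq_iff: "(\<Sum>i<n. qweight n a b i * c i) = b * sum c {..<n} \<longleftrightarrow> c (n - 1) = 0"
proof
  assume eq: "(\<Sum>i<n. qweight n a b i * c i) = b * sum c {..<n}"
  show "c (n - 1) = 0"
  proof (rule ccontr)
    assume "c (n - 1) \<noteq> 0"
    then have "(\<Sum>i<n. b * c i) < (\<Sum>i<n. qweight n a b i * c i)"
      using two_le_n b_less_last_weight
      by (intro sum_strict_mono_ex1) (auto simp: b_le_qweight qweight_def intro!: bexI[of _ "n - 1"])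
    then show False using eq by (simp add: sum_distrib_left)
  qed
next
  assume c: "c (n - 1) = 0"
  have "qweight n a b i * c i = b * c i" if "i < n" for i
    using that c by (cases "i = n - 1") (auto simp: qweight_def)
  then show "(\<Sum>i<n. qweight n a b i * c i) = b * sum c {..<n}"
    unfolding sum_distrib_left by (intro sum.cong) auto
qed

lemma I_pow_wdeg:
  assumes h: "h \<in> ideal_pow n (ideal_I n a b) r" and d: "d \<in> keys h"
  shows "r * (a * b) \<le> W d"
    and "W d = r * (a * b) \<Longrightarrow> \<exists>c j. c (n - 1) = 0 \<and> sum c {..<n} + j = r \<and> d = gen_exp n a b c j"
proof -
  obtain c j where cj: "sum c {..<n} + j = r" "mdvd (gen_exp n a b c j) d"
    using supportedD[OF subsetD[OF I_pow_supported h] d] unfolding gen_multiples_def by auto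
  have "h \<in> polys n" using ideal_subset_polys[OF is_ideal_I_pow] h by blast
  then have keys: "keys d \<subseteq> {..<n}" using d by (simp add: polys_iff)
  have r: "r * (a * b) = a * (b * sum c {..<n}) + a * b * j"
    using cj(1) by (simp add: algebra_simps flip: distrib_left)
  then have lo: "r * (a * b) \<le> W (gen_exp n a b c j)"
    unfolding wdeg_gen_exp using weighted_sum_ge[of c] by simp
  then show "r * (a * b) \<le> W d" using wdeg_mono[OF cj(2), of n "qweight n a b"] by simp
  assume eq: "W d = r * (a * b)"
  then have d_eq: "gen_exp n a b c j = d"
    using lo mdvd_wdeg_eq[where w = "qweight n a b", OF cj(2) keys qweight_pos] by simp
  then have "a * (b * sum c {..<n}) = a * (\<Sum>i<n. qweight n a b i * c i)"
    using eq r wdeg_gen_exp[of c j] by simp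
  then have "(\<Sum>i<n. qweight n a b i * c i) = b * sum c {..<n}" using a_pos by simp
  then have "c (n - 1) = 0" using weighted_sum_eq_iff by blast
  then show "\<exists>c j. c (n - 1) = 0 \<and> sum c {..<n} + j = r \<and> d = gen_exp n a b c j"
    using cj(1) d_eq by blast
qed

lemma Q_supported: "ideal_Q n a b \<subseteq> supported n (Q_exps n a b)"
proof (rule gen_ideal_minimal[OF is_ideal_supported])
  show "d + e \<in> Q_exps n a b" if "d \<in> Q_exps n a b" for d e
    using that mdvd_add unfolding Q_exps_def by blast
  have single: "Poly_Mapping.single i a \<in> Q_exps n a b" if "i < n" for i
    using that by (auto simp: Q_exps_def)
  show "Q_gens n a b \<subseteq> supported n (Q_exps n a b)"
  proof
    fix z :: "'k::comm_ring_1 mpoly" assume z: "z \<in> Q_gens n a b"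
    have "keys z \<subseteq> Q_exps n a b"
    proof (cases "z = xprod_pow n b")
      case True
      then show ?thesis by (simp add: xprod_pow_def Q_exps_def)
    next
      case False
      then obtain i where i: "i < n - 1" "z = xpow i a - xpow (n - 1) a" using z by (auto simp: Q_gens_def)
      then have "keys z \<subseteq> {Poly_Mapping.single i a, Poly_Mapping.single (n - 1) a}"
        by (auto simp: in_keys_iff lookup_minus lookup_xpow split: if_splits)
      then show ?thesis using single[of i] single[of "n - 1"] i(1) two_le_n by auto
    qed
    moreover have "z \<in> polys n" using z Q_gens_polys by blast
    ultimately show "z \<in> supported n (Q_exps n a b)" by (simp add: supported_def)
  qed
qed

end

context Q_setting
begin

lemma q_eval_gen_exp:
  assumes c: "c (n - 1) = 0"
  shows "q_eval n a b lam s (gen_exp n a b c j) =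
    (if sum c {..<n} + j = s then lam (n - 1) ^ j * (\<Prod>i<n - 1. lam i ^ c i) else 0)"
proof -
  let ?e = "gen_exp n a b c j"
  have last: "lookup ?e (n - 1) = b * j" using two_le_n c by (simp add: lookup_gen_exp)
  have other: "lookup ?e i = a * c i + b * j" if "i < n - 1" for i
    using that by (simp add: lookup_gen_exp)
  have "W ?e = (sum c {..<n} + j) * (a * b)"
    using c weighted_sum_eq_iff[of c] by (simp add: wdeg_gen_exp algebra_simps)
  then have "W ?e = s * (a * b) \<longleftrightarrow> sum c {..<n} + j = s" using a_pos b_pos by simp
  moreover have "(\<Prod>i<n - 1. lam i ^ ((lookup ?e i - lookup ?e (n - 1)) div a)) = (\<Prod>i<n - 1. lam i ^ c i)"
    using a_pos last other by (intro prod.cong) auto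
  ultimately show ?thesis
    using b_pos last other by (simp add: q_eval_def)
qed

lemma prod_power_add_delta:
  "l < n - 1 \<Longrightarrow> (\<Prod>i<n - 1. (lam i :: 'k::comm_ring_1) ^ (c i + delta l i)) = lam l * (\<Prod>i<n - 1. lam i ^ c i)"
  by (simp add: power_add prod.distrib delta_def prod_power_delta[of l "n - 1" lam 1, simplified])

lemma q_eval_add_minimal_weight:
  fixes lam :: "nat \<Rightarrow> 'k::comm_ring_1"
  assumes d: "d \<in> Q_exps n a b" "keys d \<subseteq> {..<n}"
    and h: "h \<in> ideal_pow n (ideal_I n a b) r" and d': "d' \<in> keys h"
    and weights: "W d = a * b" "W d' = r * (a * b)"
  shows "q_eval n a b lam (Suc r) (d + d')
       = (\<Sum>l<n. if d = qbeta n a b l then lam l else 0) * q_eval n a b lam r d'"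
proof -
  obtain l0 where l0: "l0 < n" "d = qbeta n a b l0" using Q_exps_wdeg(2)[OF d] weights by auto
  have G: "(\<Sum>l<n. if d = qbeta n a b l then lam l else 0) = lam l0"
    using l0 qbeta_eq_iff by (simp add: if_distrib cong: if_cong)
  obtain c j where cj: "c (n - 1) = 0" "sum c {..<n} + j = r" "d' = gen_exp n a b c j"
    using I_pow_wdeg(2)[OF h d'] weights by blast
  have F': "q_eval n a b lam r d' = lam (n - 1) ^ j * (\<Prod>i<n - 1. lam i ^ c i)"
    using q_eval_gen_exp[where c = c and lam = lam and s = r and j = j, OF cj(1)] cj by simp
  show ?thesis
  proof (cases "l0 < n - 1")
    case True
    let ?c = "\<lambda>i. c i + delta l0 i"
    have "d + d' = gen_exp n a b ?c j"
      using l0 True cj(3) gen_exp_add[of n a b "delta l0" 0 c j]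
      by (simp add: qbeta_def gen_exp_def single_eq_expv_delta add.commute mult.commute)
    moreover have "?c (n - 1) = 0" using cj(1) True by (simp add: delta_def)
    moreover have "sum ?c {..<n} + j = Suc r" using cj(2) l0(1) by (simp add: sum.distrib sum_delta)
    ultimately have "q_eval n a b lam (Suc r) (d + d') = lam (n - 1) ^ j * (\<Prod>i<n - 1. lam i ^ ?c i)"
      using q_eval_gen_exp[of ?c lam "Suc r" j] by simp
    then show ?thesis using G F' prod_power_add_delta[OF True, of lam c] by (simp add: mult_ac)
  next
    case False
    then have "l0 = n - 1" "d = expv n (\<lambda>_. b)" using l0 by (simp_all add: qbeta_def)
    moreover have "expv n (\<lambda>_. b) + d' = gen_exp n a b c (Suc j)"
      using cj(3) gen_exp_add[of n a b "\<lambda>_. 0" 1 c j] by (simp add: gen_exp_def)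
    ultimately have "q_eval n a b lam (Suc r) (d + d') = lam (n - 1) ^ Suc j * (\<Prod>i<n - 1. lam i ^ c i)"
      using q_eval_gen_exp[where c = c and lam = lam and s = "Suc r" and j = "Suc j", OF cj(1)] cj(2) by simp
    then show ?thesis using G F' \<open>l0 = n - 1\<close> by simp
  qed
qed

lemma q_eval_add:
  fixes lam :: "nat \<Rightarrow> 'k::comm_ring_1"
  assumes d: "d \<in> Q_exps n a b" "keys d \<subseteq> {..<n}"
    and h: "h \<in> ideal_pow n (ideal_I n a b) r" and d': "d' \<in> keys h"
  shows "q_eval n a b lam (Suc r) (d + d')
       = (\<Sum>l<n. if d = qbeta n a b l then lam l else 0) * q_eval n a b lam r d'"
proof -
  have Dd: "a * b \<le> W d" by (rule Q_exps_wdeg(1)[OF d])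
  have Dd': "r * (a * b) \<le> W d'" by (rule I_pow_wdeg(1)[OF h d'])
  consider "W d \<noteq> a * b" | "W d = a * b" "W d' \<noteq> r * (a * b)" | "W d = a * b" "W d' = r * (a * b)"
    by blast
  then show ?thesis
  proof cases
    case 1
    then have "\<forall>l<n. d \<noteq> qbeta n a b l" using wdeg_qbeta by auto
    moreover have "W (d + d') \<noteq> Suc r * (a * b)" using 1 Dd Dd' by (simp add: wdeg_add)
    ultimately show ?thesis by (simp add: q_eval_def)
  next
    case 2
    then have "W (d + d') \<noteq> Suc r * (a * b)" by (simp add: wdeg_add)
    then show ?thesis using 2 by (simp add: q_eval_def)
  next
    case 3
    then show ?thesis by (rule q_eval_add_minimal_weight[OF d h d'])
  qed
qed


lemma Q_coeffs_nondegenerate: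
  fixes K :: "'k::field mpoly set"
  assumes K: "is_ideal n K" "K \<subseteq> ideal_Q n a b"
    and eq: "ideal_prod n K (ideal_pow n (ideal_I n a b) r) = ideal_pow n (ideal_I n a b) (Suc r)"
    and lam: "\<exists>i<n. lam i \<noteq> 0"
  shows "\<exists>k\<in>K. (\<Sum>l<n. lam l * lookup k (qbeta n a b l)) \<noteq> 0"
proof -
  obtain c j where cj: "c (n - 1) = 0" "sum c {..<n} + j = Suc r"
    and nonzero: "lam (n - 1) ^ j * (\<Prod>i<n - 1. lam i ^ c i) \<noteq> 0"
    using exists_nonzero_q_monomial[OF lam] by blast
  have z: "(monom (gen_exp n a b c j) :: 'k mpoly) \<in> ideal_prod n K (ideal_pow n (ideal_I n a b) r)"
    using gen_monom_in_I_pow[OF cj(2)] eq by (simp add: gen_monom_def)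
  show ?thesis
  proof (rule coeffs_nonzero_if_lin_ext_nonzero[OF K(1) is_ideal_I_pow _ z])
    fix k h :: "'k mpoly" and d d'
    assume k: "k \<in> K" and h: "h \<in> ideal_pow n (ideal_I n a b) r" and d: "d \<in> keys k" and d': "d' \<in> keys h"
    show "q_eval n a b lam (Suc r) (d + d')
        = (\<Sum>l<n. if d = qbeta n a b l then lam l else 0) * q_eval n a b lam r d'"
    proof (rule q_eval_add[OF _ _ h d'])
      show "d \<in> Q_exps n a b" using supportedD[OF subsetD[OF Q_supported subsetD[OF K(2) k]] d] .
      have "k \<in> polys n" using ideal_subset_polys[OF K(1)] k by blast
      then show "keys d \<subseteq> {..<n}" using d by (simp add: polys_iff)
    qed
  next
    show "lin_ext (q_eval n a b lam (Suc r)) (monom (gen_exp n a b c j)) \<noteq> 0"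
      using q_eval_gen_exp[where c = c and lam = lam and s = "Suc r" and j = j, OF cj(1)] cj(2) nonzero
      by (simp add: lin_ext_monom)
  qed
qed

lemma Q_gens_eq: "gen_ideal n (qgen n a b ` {..<n}) = (ideal_Q n a b :: 'k::comm_ring_1 mpoly set)"
proof -
  have "{..<n} = insert (n - 1) {..<n - 1}" using two_le_n by auto
  then have "(qgen n a b ` {..<n} :: 'k mpoly set) = Q_gens n a b"
    by (auto simp: Q_gens_def qgen_def image_iff)
  then show ?thesis by simp
qed

lemma graded_gens_Q: "graded_gens n (qgen n a b :: nat \<Rightarrow> 'k::comm_ring_1 mpoly) (qbeta n a b) (qweight n a b) (a * b)"
proof
  fix l assume l: "l < n"
  show "qgen n a b l \<in> (polys n :: 'k mpoly set)"
    using l two_le_n by (auto simp: qgen_def intro!: polys_diff polys_xpow polys_xprod_pow)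
  show "W (qbeta n a b l) = a * b" by (rule wdeg_qbeta[OF l])
  show "a * b \<le> W d" if "d \<in> keys (qgen n a b l :: 'k mpoly)" for d
  proof (cases "l < n - 1")
    case True
    then have "keys (qgen n a b l :: 'k mpoly) \<subseteq> {Poly_Mapping.single l a, Poly_Mapping.single (n - 1) a}"
      by (auto simp: qgen_def in_keys_iff lookup_minus lookup_xpow split: if_splits)
    then show ?thesis using that l two_le_n wdeg_single_ge by auto
  next
    case False
    then show ?thesis using that by (simp add: qgen_def xprod_pow_def wdeg_xprod_exp)
  qed
  fix l' assume l': "l' < n"
  have ne: "Poly_Mapping.single i a \<noteq> Poly_Mapping.single (n - 1) a" if "i < n - 1" for i
    using that single_eq_single_iff[OF a_pos, of i "n - 1"] by simp
  show "lookup (qgen n a b l :: 'k mpoly) (qbeta n a b l') = (if l = l' then 1 else 0)"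
  proof (cases "l < n - 1"; cases "l' < n - 1")
    assume "l < n - 1" "l' < n - 1"
    then show ?thesis using ne[of l'] single_eq_single_iff[OF a_pos, of l' l]
      by (simp add: qgen_def qbeta_def lookup_minus lookup_xpow eq_commute)
  next
    assume "l < n - 1" "\<not> l' < n - 1"
    then show ?thesis using xprod_exp_ne_single[of l] xprod_exp_ne_single[of "n - 1"]
      by (simp add: qgen_def qbeta_def lookup_minus lookup_xpow)
  next
    assume "\<not> l < n - 1" "l' < n - 1"
    then show ?thesis using xprod_exp_ne_single[of l']
      by (auto simp: qgen_def qbeta_def xprod_pow_def lookup_monom)
  next
    assume "\<not> l < n - 1" "\<not> l' < n - 1"
    then show ?thesis using l l' by (simp add: qgen_def qbeta_def xprod_pow_def lookup_monom)
  qed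
next
  show "0 < qweight n a b i" for i by (rule qweight_pos)
qed

lemma Q_minimal:
  fixes K :: "'k::field mpoly set"
  assumes red: "is_reduction n K (ideal_I n a b)" and KQ: "K \<subseteq> ideal_Q n a b"
  shows "K = ideal_Q n a b"
proof -
  have K: "is_ideal n K" using red by (simp add: is_reduction_def)
  obtain r where eq: "ideal_prod n K (ideal_pow n (ideal_I n a b) r) = ideal_pow n (ideal_I n a b) (Suc r)"
    using red by (auto simp: is_reduction_def)
  have n: "1 \<le> n" using two_le_n by simp
  have KQ': "K \<subseteq> gen_ideal n (qgen n a b ` {..<n})" using KQ by (simp add: Q_gens_eq)
  have "K = gen_ideal n (qgen n a b ` {..<n})"
    by (rule reduction_eq_gen_ideal_if_nondegenerate[OF graded_gens_Q n K(1) KQ' eq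
          Q_coeffs_nondegenerate[OF K KQ eq]])
  then show ?thesis by (simp add: Q_gens_eq)
qed

lemma Q_minimal_reduction: "minimal_reduction n (ideal_Q n a b) (ideal_I n a b :: 'k::field mpoly set)"
proof -
  have "ideal_prod n (ideal_Q n a b) (ideal_pow n (ideal_I n a b) (n - 1))
      = (ideal_pow n (ideal_I n a b) (Suc (n - 1)) :: 'k mpoly set)"
    using two_le_n nb_less_a by (intro Q_reduction_eq) auto
  moreover have "ideal_Q n a b \<subseteq> (ideal_I n a b :: 'k mpoly set)"
    using two_le_n by (intro Q_subset_I) simp
  ultimately have "is_reduction n (ideal_Q n a b) (ideal_I n a b :: 'k mpoly set)"
    unfolding is_reduction_def using is_ideal_Q by blast
  then show ?thesis unfolding minimal_reduction_def using Q_minimal by blast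
qed

end


theorem mainTheorem11:
  fixes n a b :: nat
  assumes "n \<ge> 2" and "0 < b" and "b < a"
  defines "I \<equiv> gen_ideal n ((\<lambda>i. Var i ^ a) ` {..<n} \<union> {(\<Prod>i<n. Var i) ^ b})
              :: ('k::field) mpoly set"
      and "J \<equiv> gen_ideal n ((\<lambda>i. Var i ^ a) ` {..<n}) :: ('k::field) mpoly set"
      and "Q \<equiv> gen_ideal n ((\<lambda>i. Var i ^ a - Var (n - 1) ^ a) ` {..<n - 1}
                  \<union> {(\<Prod>i<n. Var i) ^ b}) :: ('k::field) mpoly set"
  shows "(minimal_reduction n J I \<longleftrightarrow> a \<le> n * b)
       \<and> (a \<le> n * b \<longrightarrow> red_num n J I = (LEAST p. 1 \<le> p \<and> p \<le> n \<and> a \<le> p * b) - 1)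
       \<and> (n * b < a \<longrightarrow> minimal_reduction n Q I \<and> red_num n Q I = n - 1)"
proof -
  have n: "1 \<le> n" using assms(1) by simp
  have I: "I = ideal_I n a b" unfolding I_def I_gens_def by (simp add: Var_power prod_Var_power)
  have J: "J = ideal_J n a" unfolding J_def J_gens_def by (simp add: Var_power)
  have Q: "Q = ideal_Q n a b" unfolding Q_def Q_gens_def by (simp add: Var_power prod_Var_power)
  have "minimal_reduction n J I \<longleftrightarrow> a \<le> n * b"
    unfolding I J by (rule J_minimal_reduction_iff[OF n assms(2,3)])
  moreover have "red_num n J I = (LEAST p. 1 \<le> p \<and> p \<le> n \<and> a \<le> p * b) - 1" if "a \<le> n * b"
    unfolding I J by (rule J_red_num[OF n that])
  moreover have "minimal_reduction n Q I \<and> red_num n Q I = n - 1" if "n * b < a"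
  proof -
    interpret Q_setting n a b using assms(1,2) that by unfold_locales
    show ?thesis unfolding I Q using Q_minimal_reduction Q_red_num[OF n less_imp_le[OF that] assms(2)] by blast
  qed
  ultimately show ?thesis by blast
qed

end
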